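(* The polynomials $P_{m,k}(q)$ ($m\ge0$, $0\le k\le m$) and $Q_{m,k}(q)$ ($m\ge1$, $0\le k\le m-1$) have symmetric coefficients.
   Context: A polynomial $a_0+a_1x+\cdots+a_nx^n$ of degree $n$ has symmetric coefficients if $a_i=a_{n-i}$ for $0\le i\le n$. $[k]=\frac{1-q^k}{1-q}$, $[k]!=\prod_{i=1}^k[i]$, $[0]!=1$. Let $S_{m,n}(q)=\sum_{k=1}^n\frac{[2k]}{[2]}[k]^{m-1}q^{\frac{m+1}{2}(n-k)}$. The polynomials $P_{m,j},Q_{m,j}\in\mathbb{Z}[q]$ are those (shown to exist by Guo and Zeng, and uniquely determined) such that for all $n\ge1$: $S_{2m+1,n}(q)=\sum_{k=0}^m(-q^n)^{m-k}\frac{[k]!}{[m+1]!}P_{m,m-k}(q)\frac{([n][n+1])^{k+1}}{[2]}$ for $m\ge0$, and $S_{2m,n}(q)=(1-q^{n+\frac12})\sum_{k=0}^m(-q^n)^{m-k}\frac{(1-q^{\frac12})^{m-k}Q_{m,m-k}(q^{\frac12})}{\prod_{i=0}^{m-k}(1-q^{m-i+\frac12})}\frac{([n][n+1])^k}{[2]}$ for $m\ge1$. *)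

theory Defs
  imports "HOL-Analysis.Analysis" "HOL-Computational_Algebra.Polynomial"
begin

definition qint :: "real \<Rightarrow> nat \<Rightarrow> real" where
  "qint q k = (1 - q ^ k) / (1 - q)"

definition qfact :: "real \<Rightarrow> nat \<Rightarrow> real" where
  "qfact q k = (\<Prod>i=1..k. qint q i)"

definition S :: "nat \<Rightarrow> nat \<Rightarrow> real \<Rightarrow> real" where
  "S m n q = (\<Sum>k=1..n. qint q (2*k) / qint q 2 * qint q k ^ (m - 1)
                * q powr ((real m + 1) / 2 * (real n - real k)))"

definition symmetric_coeffs :: "'a::zero poly \<Rightarrow> bool" where
  "symmetric_coeffs p \<longleftrightarrow> (\<forall>i\<le>degree p. coeff p i = coeff p (degree p - i))"

definition evalZ :: "int poly \<Rightarrow> real \<Rightarrow> real" where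
  "evalZ p x = poly (map_poly real_of_int p) x"

text \<open>The defining identity of the family P_{m,0},...,P_{m,m} (P j stands for P_{m,j}).\<close>
definition P_identity :: "nat \<Rightarrow> (nat \<Rightarrow> int poly) \<Rightarrow> bool" where
  "P_identity m P \<longleftrightarrow>
     (\<forall>n\<ge>1. \<forall>q::real. 0 < q \<and> q < 1 \<longrightarrow>
        S (2*m+1) n q =
          (\<Sum>k=0..m. (- (q ^ n)) ^ (m - k) * qfact q k / qfact q (m+1)
                * evalZ (P (m - k)) q * (qint q n * qint q (n+1)) ^ (k+1) / qint q 2))"

text \<open>The defining identity of the family Q_{m,0},...,Q_{m,m} (Q j stands for Q_{m,j}).\<close>
definition Q_identity :: "nat \<Rightarrow> (nat \<Rightarrow> int poly) \<Rightarrow> bool" where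
  "Q_identity m Q \<longleftrightarrow>
     (\<forall>n\<ge>1. \<forall>q::real. 0 < q \<and> q < 1 \<longrightarrow>
        S (2*m) n q =
          (1 - q powr (real n + 1/2)) *
          (\<Sum>k=0..m. (- (q ^ n)) ^ (m - k) * (1 - q powr (1/2)) ^ (m - k)
                * evalZ (Q (m - k)) (q powr (1/2))
                / (\<Prod>i=0..m-k. (1 - q powr (real (m - i) + 1/2)))
                * (qint q n * qint q (n+1)) ^ k / qint q 2))"

end

theory Submission
  imports Defs
begin

text \<open>
  Write \<open>q = s\<^sup>2\<close> and \<open>x = q\<^sup>n\<close>. Expanding \<open>[2k]/[2] [k]\<^bsup>M-1\<^esup>\<close> in powers of \<open>q\<^sup>k\<close> and summing the
  resulting geometric series over \<open>k\<close> turns \<open>S\<^sub>M\<^sub>,\<^sub>n(q)\<close> into a polynomial in \<open>x\<close> whose coefficients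
  depend only on \<open>s\<close> (for even \<open>M\<close> after a cancellation). The right-hand sides of the defining
  identities are combinations of \<open>x\<^bsup>m-k\<^esup> U(x) V(x)\<^sup>k\<close>, where \<open>U\<close>, \<open>V\<close> are \<open>(1 - x)(1 - q x)\<close> or
  \<open>1 - q\<^bsup>1/2\<^esup> x\<close>. Both sides agree at the infinitely many points \<open>x = q\<^sup>n\<close>, hence as polynomials.

  Letting \<open>s \<rightarrow> 0\<close> in this polynomial identity shows that \<open>P\<^sub>m\<^sub>,\<^sub>j(0)\<close> and \<open>Q\<^sub>m\<^sub>,\<^sub>j(0)\<close> are the ballot
  number \<open>C(m+j,j) - 2 C(m+j-1,j-1)\<close>, which is positive for \<open>j < m\<close>; differentiating at \<open>x = 1\<close> gives
  \<open>P\<^sub>m\<^sub>,\<^sub>m = 0\<close> for \<open>m \<ge> 1\<close>. After clearing denominators both sides of the identities are polynomials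
  in \<open>q\<close>, so they also hold at \<open>1/q\<close>, and \<open>S\<^sub>M\<^sub>,\<^sub>n(1/q)\<close> is a power of \<open>q\<close> times \<open>S\<^sub>M\<^sub>,\<^sub>n(q)\<close>.
  Since the members of the basis vanish at \<open>0\<close> to pairwise different orders, comparing
  coefficients yields \<open>q\<^sup>A P(q) = q\<^sup>B P(1/q)\<close>. A polynomial with \<open>P(0) \<noteq> 0\<close> satisfying such a
  relation is its own reflection, i.e. has symmetric coefficients.
\<close>

section \<open>Identity principles for polynomials\<close>

lemma real_polynomial_function_poly [intro]: "real_polynomial_function (poly p)"
  unfolding real_polynomial_function_iff_sum
  by (intro exI[of _ "coeff p"] exI[of _ "degree p"]) (simp add: fun_eq_iff poly_altdef)

lemma real_polynomial_function_evalZ [intro]: "real_polynomial_function (evalZ p)"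
  unfolding evalZ_def[abs_def] by (rule real_polynomial_function_poly)

lemma real_polynomial_function_eq_on_Ioo:
  fixes f g :: "real \<Rightarrow> real"
  assumes "real_polynomial_function f" "real_polynomial_function g" "a < b"
    and "\<And>x. a < x \<Longrightarrow> x < b \<Longrightarrow> f x = g x"
  shows "f = g"
proof -
  obtain c n where c: "(\<lambda>x. f x - g x) = (\<lambda>x. \<Sum>i\<le>n. c i * x ^ i)"
    using real_polynomial_function_diff[OF assms(1,2)] real_polynomial_function_iff_sum by blast
  define p where "p = (\<Sum>i\<le>n. monom (c i) i)"
  have p: "poly p x = f x - g x" for x
    unfolding p_def using fun_cong[OF c, of x] by (simp add: poly_sum poly_monom mult_ac)
  have "p = 0"
  proof (rule ccontr)
    assume "p \<noteq> 0"
    then have "finite {x. poly p x = 0}" by (rule poly_roots_finite)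
    moreover have "{a<..<b} \<subseteq> {x. poly p x = 0}" using assms(4) p by auto
    ultimately show False using \<open>a < b\<close> finite_subset infinite_Ioo by blast
  qed
  then show ?thesis using p by (auto simp: fun_eq_iff)
qed

lemma real_polynomial_function_id [intro]: "real_polynomial_function (\<lambda>x. x)"
  by (simp add: real_polynomial_function_eq)

lemma identity_extends_by_polynomial_multiple:
  fixes L R c F G :: "real \<Rightarrow> real"
  assumes "real_polynomial_function F" "real_polynomial_function G"
    and F: "\<And>t. 0 < t \<Longrightarrow> t \<noteq> 1 \<Longrightarrow> F t = c t * L t"
    and G: "\<And>t. 0 < t \<Longrightarrow> t \<noteq> 1 \<Longrightarrow> G t = c t * R t"
    and c: "\<And>t. 0 < t \<Longrightarrow> t \<noteq> 1 \<Longrightarrow> c t \<noteq> 0"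
    and eq: "\<And>t. 0 < t \<Longrightarrow> t < 1 \<Longrightarrow> L t = R t"
    and t: "0 < t" "t \<noteq> 1"
  shows "L t = R t"
proof -
  have "F = G"
    using assms(1,2) by (rule real_polynomial_function_eq_on_Ioo[of _ _ 0 1]) (simp_all add: F G eq)
  then have "c t * L t = c t * R t" using F[OF t] G[OF t] by metis
  then show ?thesis using c[OF t] by simp
qed

lemma poly_eq_0_if_vanishes_on_powers:
  fixes p :: "real poly"
  assumes c: "0 < c" "c < 1" and vanish: "\<And>n. n \<ge> 1 \<Longrightarrow> poly p (c ^ n) = 0"
  shows "p = 0"
proof (rule ccontr)
  assume "p \<noteq> 0"
  then have "finite {x. poly p x = 0}" by (rule poly_roots_finite)
  moreover have "(\<lambda>n. c ^ n) ` {1..} \<subseteq> {x. poly p x = 0}" using vanish by auto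
  ultimately have "finite ((\<lambda>n. c ^ n) ` {1::nat..})" using finite_subset by blast
  moreover have "inj_on (\<lambda>n. c ^ n) {1::nat..}"
    using c by (auto intro!: inj_onI) (metis less_irrefl linorder_neqE_nat power_strict_decreasing_iff)
  ultimately show False using finite_imageD infinite_Ici by blast
qed

section \<open>Symmetric coefficients and reciprocity\<close>

lemma symmetric_coeffs_iff_reflect_poly: "symmetric_coeffs p \<longleftrightarrow> reflect_poly p = p"
  unfolding symmetric_coeffs_def poly_eq_iff coeff_reflect_poly
  by (metis coeff_eq_0 diff_diff_cancel diff_le_self not_le)

lemma symmetric_coeffs_map_poly_of_int_iff:
  "symmetric_coeffs (map_poly real_of_int p) \<longleftrightarrow> symmetric_coeffs p"
  by (simp add: symmetric_coeffs_def degree_map_poly coeff_map_poly)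

text \<open>Comparing lowest and highest coefficients forces \<open>B = A + deg P\<close>.\<close>
lemma symmetric_coeffs_if_reciprocal:
  fixes P :: "real poly"
  assumes P0: "poly P 0 \<noteq> 0"
    and reciprocal: "\<And>q. 0 < q \<Longrightarrow> q < 1 \<Longrightarrow> q ^ A * poly P q = q ^ B * poly P (1 / q)"
  shows "symmetric_coeffs P"
proof -
  define D where "D = degree P"
  have "poly (monom 1 (A + D) * P) = poly (monom 1 B * reflect_poly P)"
  proof (rule real_polynomial_function_eq_on_Ioo[of _ _ 0 1])
    fix x :: real assume x: "0 < x" "x < 1"
    have "poly (monom 1 B * reflect_poly P) x = x ^ B * (x ^ D * poly P (1 / x))"
      using x by (simp add: poly_monom poly_reflect_poly_nz D_def inverse_eq_divide)
    also have "\<dots> = poly (monom 1 (A + D) * P) x"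
      using reciprocal[OF x] by (simp add: poly_monom power_add)
    finally show "poly (monom 1 (A + D) * P) x = poly (monom 1 B * reflect_poly P) x" by simp
  qed auto
  then have eq: "coeff (monom 1 (A + D) * P) i = coeff (monom 1 B * reflect_poly P) i" for i
    by (simp add: poly_eq_poly_eq_iff)
  have "coeff P 0 \<noteq> 0" using P0 by (simp add: poly_0_coeff_0)
  then have "B \<le> A + D" using eq[of "A + D"] by (simp add: coeff_monom_mult split: if_splits)
  moreover have "lead_coeff P \<noteq> 0" using P0 by auto
  then have "A + D \<le> B" using eq[of B] by (simp add: coeff_monom_mult D_def split: if_splits)
  ultimately have "B = A + D" by simp
  then have "reflect_poly P = P"
    using eq[of "A + D + _"] by (intro poly_eqI) (simp add: coeff_monom_mult)
  then show ?thesis by (simp add: symmetric_coeffs_iff_reflect_poly)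
qed

section \<open>A basis adapted to the order of vanishing at zero\<close>

definition valuation_basis :: "'a::comm_ring_1 poly \<Rightarrow> 'a poly \<Rightarrow> nat \<Rightarrow> nat \<Rightarrow> 'a poly" where
  "valuation_basis U V m k = monom 1 (m - k) * U * V ^ k"

lemma poly_valuation_basis:
  "poly (valuation_basis U V m k) x = x ^ (m - k) * poly U x * poly V x ^ k"
  by (simp add: valuation_basis_def poly_monom)

text \<open>For \<open>k \<le> m\<close> the element \<open>valuation_basis U V m k\<close> vanishes at zero to order exactly \<open>m - k\<close>;
  so if \<open>k\<^sub>0\<close> is the largest index with \<open>\<beta> k\<^sub>0 \<noteq> 0\<close>, the coefficient of \<open>x\<^bsup>m-k\<^sub>0\<^esup>\<close> in the
  combination is \<open>\<beta> k\<^sub>0 U(0) V(0)\<^bsup>k\<^sub>0\<^esup> \<noteq> 0\<close>.\<close>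
lemma valuation_basis_independent:
  fixes \<beta> :: "nat \<Rightarrow> 'a::idom"
  assumes U: "poly U 0 \<noteq> 0" and V: "poly V 0 \<noteq> 0"
    and zero: "(\<Sum>k\<le>m. smult (\<beta> k) (valuation_basis U V m k)) = 0"
  shows "\<forall>k\<le>m. \<beta> k = 0"
proof (rule ccontr)
  assume "\<not> (\<forall>k\<le>m. \<beta> k = 0)"
  define K where "K = {k. k \<le> m \<and> \<beta> k \<noteq> 0}"
  have "K \<noteq> {}" "finite K" using \<open>\<not> (\<forall>k\<le>m. \<beta> k = 0)\<close> unfolding K_def by auto
  define k0 where "k0 = Max K"
  have k0K: "k0 \<in> K" and k0max: "\<And>k. k \<in> K \<Longrightarrow> k \<le> k0"
    unfolding k0_def using \<open>K \<noteq> {}\<close> \<open>finite K\<close> by auto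
  define W where "W = (\<Sum>k\<le>m. smult (\<beta> k) (monom 1 (m - k) * V ^ k))"
  have "U * W = 0"
    using zero unfolding W_def valuation_basis_def by (simp add: sum_distrib_left mult_ac)
  have "\<beta> k * coeff (monom 1 (m - k) * V ^ k) (m - k0) = (if k = k0 then \<beta> k0 * poly V 0 ^ k0 else 0)"
    if "k \<le> m" for k
  proof (cases "\<beta> k = 0")
    case False
    then have "k \<le> k0" using k0max that unfolding K_def by auto
    then show ?thesis using k0K unfolding K_def
      by (auto simp: coeff_monom_mult poly_0_coeff_0 coeff_0_power)
  qed (use k0K in \<open>auto simp: K_def\<close>)
  then have "coeff W (m - k0) = (\<Sum>k\<le>m. if k = k0 then \<beta> k0 * poly V 0 ^ k0 else 0)"
    unfolding W_def coeff_sum coeff_smult by (intro sum.cong) auto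
  also have "\<dots> = \<beta> k0 * poly V 0 ^ k0" using k0K unfolding K_def by simp
  finally have "W \<noteq> 0" using k0K V unfolding K_def by auto
  moreover have "U \<noteq> 0" using U by auto
  ultimately show False using \<open>U * W = 0\<close> by simp
qed

lemma valuation_basis_expansion_unique:
  fixes a b :: "nat \<Rightarrow> real"
  assumes c: "0 < c" "c < 1" and U: "poly U 0 \<noteq> 0" and V: "poly V 0 \<noteq> 0"
    and eq: "\<And>n. n \<ge> 1 \<Longrightarrow> (\<Sum>k\<le>m. a k * poly (valuation_basis U V m k) (c ^ n))
                              = (\<Sum>k\<le>m. b k * poly (valuation_basis U V m k) (c ^ n))"
    and k: "k \<le> m"
  shows "a k = b k"
proof -
  have "(\<Sum>k\<le>m. smult (a k - b k) (valuation_basis U V m k)) = 0"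
    using c by (rule poly_eq_0_if_vanishes_on_powers)
      (simp add: poly_sum sum_subtractf left_diff_distrib eq)
  then show ?thesis using valuation_basis_independent[OF U V] k by fastforce
qed

section \<open>Ballot numbers\<close>

lemma choose_neg_gchoose:
  "real ((k + a) choose k) = (-1) ^ k * ((- (real a + 1)) gchoose k)"
proof -
  have "((- (real a + 1)) gchoose k) = (-1) ^ k * ((real k - (- (real a + 1)) - 1) gchoose k)"
    by (rule gbinomial_negated_upper)
  also have "real k - (- (real a + 1)) - 1 = real (k + a)" by simp
  finally show ?thesis by (simp add: binomial_gbinomial power_mult_distrib[symmetric])
qed

lemma sum_choose_convolution:
  "(\<Sum>k\<le>n. real ((k + a) choose k) * real ((n - k + b) choose (n - k)))
     = real ((n + a + b + 1) choose n)"
proof -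
  have "(\<Sum>k\<le>n. real ((k + a) choose k) * real ((n - k + b) choose (n - k)))
      = (\<Sum>k\<le>n. (-1) ^ n * (((- (real a + 1)) gchoose k) * ((- (real b + 1)) gchoose (n - k))))"
  proof (rule sum.cong[OF refl])
    fix k assume "k \<in> {..n}"
    then have "(-1::real) ^ k * (-1) ^ (n - k) = (-1) ^ n" by (simp add: power_add[symmetric])
    then show "real ((k + a) choose k) * real ((n - k + b) choose (n - k))
        = (-1) ^ n * (((- (real a + 1)) gchoose k) * ((- (real b + 1)) gchoose (n - k)))"
      unfolding choose_neg_gchoose by (metis mult.assoc mult.left_commute)
  qed
  also have "\<dots> = (-1) ^ n * ((- (real a + 1) + - (real b + 1)) gchoose n)"
    using gbinomial_Vandermonde[of "- (real a + 1)" "- (real b + 1)" n]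
    by (simp add: sum_distrib_left[symmetric] atLeast0AtMost)
  also have "- (real a + 1) + - (real b + 1) = - (real (a + b + 1) + 1)" by simp
  also have "(-1) ^ n * ((- (real (a + b + 1) + 1)) gchoose n) = real ((n + (a + b + 1)) choose n)"
    using choose_neg_gchoose[of n "a + b + 1"] by (simp add: power_mult_distrib[symmetric])
  finally show ?thesis by (simp add: add_ac)
qed

definition ballot :: "nat \<Rightarrow> nat \<Rightarrow> real" where
  "ballot m j = real ((m + j) choose j) - 2 * (if j = 0 then 0 else real ((m + j - 1) choose (j - 1)))"

definition choose_diff :: "nat \<Rightarrow> nat \<Rightarrow> real" where
  "choose_diff N i = real (N choose i) - (if i = 0 then 0 else real (N choose (i - 1)))"

lemma ballot_pos:
  assumes "j < m" shows "ballot m j > 0"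
proof (cases "j = 0")
  case True thus ?thesis by (simp add: ballot_def)
next
  case False
  then obtain i where j: "j = Suc i" by (cases j) auto
  define B where "B = (m + i) choose i"
  have e: "Suc (m + i) * B = ((Suc (m + i)) choose (Suc i)) * Suc i"
    unfolding B_def by (rule Suc_times_binomial_eq)
  have Bpos: "B > 0" unfolding B_def by simp
  have "real ((Suc (m + i)) choose (Suc i)) * real (Suc i) = real (Suc (m + i)) * real B"
    using e by (metis of_nat_mult)
  hence "real ((Suc (m + i)) choose (Suc i)) = real (Suc (m + i)) * real B / real (Suc i)"
    by (simp add: field_simps)
  moreover have "real (Suc (m + i)) * real B / real (Suc i) > 2 * real B"
  proof -
    have "real (Suc (m + i)) > 2 * real (Suc i)" using assms j by simp
    hence "real (Suc (m + i)) * real B > 2 * real (Suc i) * real B" using Bpos by simp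
    thus ?thesis by (simp add: field_simps)
  qed
  ultimately show ?thesis unfolding ballot_def j B_def by simp
qed

lemma sum_choose_convolution':
  assumes "i \<le> N"
  shows "(\<Sum>j\<le>i. real ((m + j) choose j) * real ((N - j) choose (i - j))) = real ((m + N + 1) choose i)"
proof -
  have "(\<Sum>j\<le>i. real ((m + j) choose j) * real ((N - j) choose (i - j)))
      = (\<Sum>j\<le>i. real ((j + m) choose j) * real ((i - j + (N - i)) choose (i - j)))"
    by (rule sum.cong) (use assms in \<open>auto simp: add_ac\<close>)
  also have "\<dots> = real ((i + m + (N - i) + 1) choose i)" by (rule sum_choose_convolution)
  finally show ?thesis using assms by (simp add: add_ac)
qed

lemma ballot_convolution:
  assumes "i \<le> N"
  shows "(\<Sum>j\<le>i. ballot m j * real ((N - j) choose (i - j))) = choose_diff (m + N) i"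
proof (cases i)
  case 0 then show ?thesis by (simp add: ballot_def choose_diff_def)
next
  case (Suc i')
  have "(\<Sum>j\<le>i. (if j = 0 then 0 else real ((m + j - 1) choose (j - 1))) * real ((N - j) choose (i - j)))
      = (\<Sum>j\<le>i'. real ((m + j) choose j) * real ((N - 1 - j) choose (i' - j)))"
    unfolding Suc by (subst sum.atMost_Suc_shift) simp
  also have "\<dots> = real ((m + N) choose i')"
    using sum_choose_convolution'[of i' "N - 1" m] assms Suc by simp
  finally have s2: "(\<Sum>j\<le>i. (if j = 0 then 0 else real ((m + j - 1) choose (j - 1)))
      * real ((N - j) choose (i - j))) = real ((m + N) choose i')" .
  have "(\<Sum>j\<le>i. ballot m j * real ((N - j) choose (i - j)))
      = (\<Sum>j\<le>i. real ((m + j) choose j) * real ((N - j) choose (i - j)))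
        - 2 * (\<Sum>j\<le>i. (if j = 0 then 0 else real ((m + j - 1) choose (j - 1))) * real ((N - j) choose (i - j)))"
    unfolding ballot_def sum_distrib_left sum_subtractf[symmetric] by (rule sum.cong) (auto simp: algebra_simps)
  also have "\<dots> = real ((m + N + 1) choose i) - 2 * real ((m + N) choose i')"
    using sum_choose_convolution'[OF assms] s2 by simp
  also have "real ((m + N + 1) choose i) = real ((m + N) choose i) + real ((m + N) choose i')"
    using Suc by simp
  finally show ?thesis unfolding choose_diff_def using Suc by simp
qed

lemma ballot_unique:
  fixes a :: "nat \<Rightarrow> real"
  assumes mN: "m \<le> N"
    and h: "\<And>i. i \<le> m \<Longrightarrow> (\<Sum>j\<le>i. a j * real ((N - j) choose (i - j))) = choose_diff (m + N) i"
  shows "j \<le> m \<Longrightarrow> a j = ballot m j"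
proof (induction j rule: less_induct)
  case (less i)
  have IH: "\<And>j. j < i \<Longrightarrow> a j = ballot m j" using less by simp
  have "(\<Sum>j\<le>i. a j * real ((N - j) choose (i - j))) = (\<Sum>j\<le>i. ballot m j * real ((N - j) choose (i - j)))"
    using h[OF less.prems] ballot_convolution[of i N m] less.prems mN by simp
  moreover have "(\<Sum>j\<le>i. a j * real ((N - j) choose (i - j))) = (\<Sum>j<i. ballot m j * real ((N - j) choose (i - j))) + a i"
    by (simp add: lessThan_Suc_atMost[symmetric] IH)
  moreover have "(\<Sum>j\<le>i. ballot m j * real ((N - j) choose (i - j))) = (\<Sum>j<i. ballot m j * real ((N - j) choose (i - j))) + ballot m i"
    by (simp add: lessThan_Suc_atMost[symmetric])
  ultimately show ?case by simp
qed

lemma coeff_one_minus_power: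
  "coeff ([:1, -1:] ^ n :: real poly) l = (-1) ^ l * real (n choose l)"
proof (induction n arbitrary: l)
  case 0 thus ?case by (cases l) auto
next
  case (Suc n)
  have e: "[:1, -1:] ^ Suc n = [:1, -1:] ^ n - pCons 0 ([:1, -1:] ^ n :: real poly)"
    by (simp add: algebra_simps)
  show ?case
  proof (cases l)
    case 0 thus ?thesis unfolding e by (simp add: Suc.IH)
  next
    case (Suc l')
    show ?thesis unfolding e Suc by (simp add: Suc.IH algebra_simps)
  qed
qed

section \<open>A closed form of \<open>S\<close>\<close>

text \<open>For \<open>q = s\<^sup>2\<close> and \<open>y = q\<^sup>k\<close> the summand \<open>[2k]/[2] [k]\<^bsup>M-1\<^esup>\<close> of \<open>S\<^sub>M\<^sub>,\<^sub>n(q)\<close> equals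
  \<open>S_numerator M (y) / S_denominator M s\<close>. The coefficient \<open>S_coeff M j\<close> of \<open>y\<^sup>j\<close> then contributes
  a geometric series in \<open>k\<close> with ratio \<open>S_ratio M s j\<close>, summed in \<open>S_closed M s (s\<^sup>n)\<close>.\<close>

definition S_numerator :: "nat \<Rightarrow> real poly" where
  "S_numerator M = [:1, 1:] * [:1, -1:] ^ M"

definition S_coeff :: "nat \<Rightarrow> nat \<Rightarrow> real" where
  "S_coeff M j = coeff (S_numerator M) j"

definition S_ratio :: "nat \<Rightarrow> real \<Rightarrow> nat \<Rightarrow> real" where
  "S_ratio M s j = s ^ (2 * j) / s ^ (M + 1)"

definition S_geom :: "nat \<Rightarrow> real \<Rightarrow> nat \<Rightarrow> real" where
  "S_geom M s j = S_ratio M s j / (1 - S_ratio M s j)"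

definition S_denominator :: "nat \<Rightarrow> real \<Rightarrow> real" where
  "S_denominator M s = (1 - s ^ 2) ^ (M - 1) * (1 - s ^ 4)"

definition S_closed :: "nat \<Rightarrow> real \<Rightarrow> real \<Rightarrow> real" where
  "S_closed M s X = (\<Sum>j\<le>M + 1. S_coeff M j * S_geom M s j * (X ^ (M + 1) - X ^ (2 * j))) / S_denominator M s"

lemma poly_S_numerator: "M \<ge> 1 \<Longrightarrow> poly (S_numerator M) y = (1 - y ^ 2) * (1 - y) ^ (M - 1)"
  by (cases M) (auto simp: S_numerator_def power2_eq_square algebra_simps)

lemma S_coeff_eq_choose_diff: "S_coeff M i = (-1) ^ i * choose_diff M i"
proof (cases i)
  case 0 thus ?thesis by (simp add: S_coeff_def S_numerator_def choose_diff_def coeff_one_minus_power)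
next
  case (Suc i')
  have "S_numerator M = [:1, -1:] ^ M + pCons 0 ([:1, -1:] ^ M)" unfolding S_numerator_def by (simp add: algebra_simps)
  hence "S_coeff M i = (-1) ^ i * real (M choose i) + (-1) ^ i' * real (M choose i')"
    unfolding S_coeff_def Suc by (simp add: coeff_one_minus_power)
  thus ?thesis unfolding choose_diff_def Suc by (simp add: algebra_simps)
qed

lemma degree_S_numerator: "degree (S_numerator M) \<le> M + 1"
proof -
  have "degree (S_numerator M) \<le> degree [:1, 1::real:] + degree ([:1, -1::real:] ^ M)"
    unfolding S_numerator_def by (rule degree_mult_le)
  also have "degree ([:1, -1::real:] ^ M) \<le> M"
    using degree_power_le[of "[:1, -1::real:]" M] by simp
  finally show ?thesis by simp
qed

lemma poly_S_numerator_eq_sum: "poly (S_numerator M) y = (\<Sum>j\<le>M + 1. S_coeff M j * y ^ j)"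
proof -
  have "poly (S_numerator M) y = (\<Sum>i\<le>degree (S_numerator M). coeff (S_numerator M) i * y ^ i)" by (rule poly_altdef)
  also have "\<dots> = (\<Sum>i\<le>M + 1. coeff (S_numerator M) i * y ^ i)"
    by (rule sum.mono_neutral_left) (use degree_S_numerator in \<open>auto simp: coeff_eq_0\<close>)
  finally show ?thesis unfolding S_coeff_def .
qed

lemma choose_diff_reflect:
  assumes "j \<le> M + 1" shows "choose_diff M (M + 1 - j) = - choose_diff M j"
proof (cases j)
  case 0 thus ?thesis by (simp add: choose_diff_def)
next
  case (Suc j')
  show ?thesis
  proof (cases "j = M + 1")
    case True thus ?thesis by (simp add: choose_diff_def)
  next
    case False
    hence jM: "j' < M" using assms Suc by simp
    have a: "M + 1 - j = M - j'" using Suc by simp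
    have b: "M - j' \<noteq> 0" using jM by simp
    have c: "M - j' - 1 = M - Suc j'" by simp
    have e1: "M choose (M - j') = M choose j'" using jM by (simp add: binomial_symmetric[symmetric])
    have e2: "M choose (M - Suc j') = M choose Suc j'" using jM by (simp add: binomial_symmetric[symmetric])
    show ?thesis unfolding choose_diff_def a c using b e1 e2 Suc by simp
  qed
qed

lemma S_coeff_reflect:
  assumes "j \<le> M + 1" shows "S_coeff M (M + 1 - j) = (-1) ^ M * S_coeff M j"
proof -
  have "(-1::real) ^ (M + 1 - j) = (-1) ^ M * (-1) ^ j * (-1)"
  proof -
    have "(-1::real) ^ (M + 1 - j) * (-1) ^ j = (-1) ^ (M + 1)" using assms by (simp add: power_add[symmetric])
    moreover have "(-1::real) ^ j * (-1) ^ j = 1" by (induct j) auto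
    ultimately have "(-1::real) ^ (M + 1 - j) = (-1) ^ (M + 1) * (-1) ^ j"
      by (metis mult.assoc mult.right_neutral)
    thus ?thesis by simp
  qed
  thus ?thesis unfolding S_coeff_eq_choose_diff using choose_diff_reflect[OF assms] by simp
qed

lemma sum_S_coeff: "M \<ge> 1 \<Longrightarrow> (\<Sum>j\<le>M + 1. S_coeff M j) = 0"
  using poly_S_numerator_eq_sum[of M 1] by (cases M) (auto simp: S_numerator_def)

lemma sum_index_S_coeff: assumes "M \<ge> 2" shows "(\<Sum>j\<le>M + 1. real j * S_coeff M j) = 0"
proof -
  have dg: "degree (pderiv (S_numerator M)) \<le> M" using degree_S_numerator[of M] by (simp add: degree_pderiv)
  have "poly (pderiv (S_numerator M)) 1 = (\<Sum>i\<le>degree (pderiv (S_numerator M)). coeff (pderiv (S_numerator M)) i)" by (simp add: poly_altdef)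
  also have "\<dots> = (\<Sum>i\<le>M. coeff (pderiv (S_numerator M)) i)"
    by (rule sum.mono_neutral_left) (use dg in \<open>auto simp: coeff_eq_0\<close>)
  also have "\<dots> = (\<Sum>i\<le>M. real (Suc i) * S_coeff M (Suc i))" by (simp add: coeff_pderiv S_coeff_def)
  also have "\<dots> = (\<Sum>j\<le>Suc M. real j * S_coeff M j)"
    by (subst sum.atMost_Suc_shift) simp
  also have "\<dots> = (\<Sum>j\<le>M + 1. real j * S_coeff M j)" by simp
  finally have e: "(\<Sum>j\<le>M + 1. real j * S_coeff M j) = poly (pderiv (S_numerator M)) 1" by simp
  obtain M' where M': "M = Suc (Suc M')" using assms by (metis add_2_eq_Suc le_Suc_ex)
  have e2: "S_numerator M = ([:1,-1:] * [:1,-1:]) * ([:1,1:] * [:1,-1:] ^ M')"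
    unfolding S_numerator_def M' power_Suc by (simp only: mult_ac)
  have "poly (pderiv (S_numerator M)) 1 = 0"
    unfolding e2 pderiv_mult poly_add poly_mult by simp
  thus ?thesis using e by simp
qed

lemma S_ratio_eq_1D:
  assumes s: "0 < s" "s < 1" and "S_ratio M s j = 1" shows "2 * j = M + 1"
proof -
  have "s ^ (2 * j) = s ^ (M + 1)" using assms unfolding S_ratio_def by (simp add: field_simps)
  thus ?thesis using s power_strict_decreasing[of "2*j" "M+1" s] power_strict_decreasing[of "M+1" "2*j" s]
    by (metis less_irrefl nat_neq_iff)
qed

lemma S_coeff_middle: "odd M \<Longrightarrow> 2 * j = M + 1 \<Longrightarrow> S_coeff M j = 0"
proof -
  assume o: "odd M" and j: "2 * j = M + 1"
  have "M + 1 - j = j" using j by simp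
  hence "S_coeff M j = - S_coeff M j" using S_coeff_reflect[of j M] o j by simp
  thus ?thesis by simp
qed


lemma power_swap: "(x ^ a) ^ b = (x ^ b) ^ a" for x :: real
  by (simp only: power_mult[symmetric] mult.commute)

lemma divide_divide_cancel: "c \<noteq> 0 \<Longrightarrow> (x / c) / (z / c) = x / (z::real)"
  by (cases "z = 0") (simp_all add: field_simps)

lemma square_powr_half_nat:
  assumes s: "0 < s" and kn: "k \<le> n"
  shows "(s ^ 2) powr ((real M + 1) / 2 * (real n - real k)) = s ^ ((M + 1) * (n - k))"
proof -
  have "(s ^ 2) powr ((real M + 1) / 2 * (real n - real k)) = (s powr 2) powr ((real M + 1) / 2 * (real n - real k))"
    using s by (simp add: powr_numeral)
  also have "\<dots> = s powr (2 * ((real M + 1) / 2 * (real n - real k)))" by (simp add: powr_powr)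
  also have "2 * ((real M + 1) / 2 * (real n - real k)) = real ((M + 1) * (n - k))"
  proof -
    have h1: "real (n - k) = real n - real k" using kn by (simp add: of_nat_diff)
    have h: "real ((M + 1) * (n - k)) = (real M + 1) * (real n - real k)" unfolding of_nat_mult h1 by simp
    show ?thesis unfolding h by (simp add: field_simps)
  qed
  also have "s powr real ((M + 1) * (n - k)) = s ^ ((M + 1) * (n - k))" by (rule powr_realpow[OF s])
  finally show ?thesis .
qed

lemma S_summand_eq:
  assumes M: "M \<ge> 1" and s: "0 < s" "s < 1" and kn: "k \<le> n"
  shows "qint (s^2) (2*k) / qint (s^2) 2 * qint (s^2) k ^ (M - 1) * (s^2) powr ((real M + 1) / 2 * (real n - real k))
       = poly (S_numerator M) ((s^2) ^ k) / S_denominator M s * s ^ ((M + 1) * (n - k))"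
proof -
  have "s^2 < 1" using s by (subst power_less_one_iff) auto
  hence q1: "1 - s^2 \<noteq> 0" by simp
  have "s^4 < 1" using s by (subst power_less_one_iff) auto
  hence q2: "1 - s^4 \<noteq> 0" by simp
  define y where "y = (s^2)^k"
  have y2: "(s^2)^(2*k) = y^2" unfolding y_def by (simp only: power_mult power_swap[of "s^2" 2 k])
  have s4: "(s^2)^2 = s^4" by (simp only: power_mult[symmetric]) simp
  have a: "qint (s^2) (2*k) / qint (s^2) 2 = (1 - y^2) / (1 - s^4)"
    unfolding qint_def y2 s4 by (rule divide_divide_cancel[OF q1])
  have b: "qint (s^2) k ^ (M - 1) = (1 - y) ^ (M - 1) / (1 - s^2) ^ (M - 1)"
    unfolding qint_def y_def by (simp add: power_divide)
  have "qint (s^2) (2*k) / qint (s^2) 2 * qint (s^2) k ^ (M - 1) = poly (S_numerator M) y / S_denominator M s"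
    unfolding a b poly_S_numerator[OF M] S_denominator_def by simp
  hence "qint (s^2) (2*k) / qint (s^2) 2 * qint (s^2) k ^ (M - 1) = poly (S_numerator M) ((s^2) ^ k) / S_denominator M s"
    unfolding y_def .
  thus ?thesis using square_powr_half_nat[OF s(1) kn] by simp
qed

lemma S_coeff_geometric_sum:
  assumes s: "0 < s" "s < 1"
  shows "S_coeff M j * ((s ^ n) ^ (M + 1) * (\<Sum>k=1..n. S_ratio M s j ^ k))
       = S_coeff M j * S_geom M s j * ((s ^ n) ^ (M + 1) - (s ^ n) ^ (2 * j))"
proof (cases "S_ratio M s j = 1")
  case True
  hence j: "2 * j = M + 1" using S_ratio_eq_1D[OF s] by blast
  hence "odd M" by presburger
  hence "S_coeff M j = 0" using S_coeff_middle j by blast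
  thus ?thesis by simp
next
  case False
  note rne = False
  define r where "r = S_ratio M s j"
  have r1: "1 - r \<noteq> 0" using False unfolding r_def by simp
  have a1: "(s^(M+1))^n = (s^n)^(M+1)" by (rule power_swap)
  have a2: "(s^(2*j))^n = (s^n)^(2*j)" by (rule power_swap)
  have rn: "(s ^ n) ^ (M + 1) * r ^ n = (s ^ n) ^ (2 * j)"
    unfolding r_def S_ratio_def power_divide a1 a2 using s by simp
  have "(\<Sum>k=1..n. r ^ k) = (r - r ^ Suc n) / (1 - r)"
  proof (cases "n = 0")
    case True thus ?thesis by simp
  next
    case False thus ?thesis using sum_gp[of r 1 n] r1 rne unfolding r_def by auto
  qed
  note G = this
  have "(s ^ n) ^ (M + 1) * (\<Sum>k=1..n. r ^ k) = r / (1 - r) * ((s ^ n) ^ (M + 1) - (s ^ n) ^ (M + 1) * r ^ n)"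
    unfolding G using r1 by (simp add: field_simps)
  also have "\<dots> = r / (1 - r) * ((s ^ n) ^ (M + 1) - (s ^ n) ^ (2 * j))" using rn by simp
  finally show ?thesis unfolding S_geom_def r_def by simp
qed

lemma S_summand_expansion:
  assumes M: "M \<ge> 1" and s: "0 < s" "s < 1" and k: "k \<le> n"
  shows "qint (s^2) (2*k) / qint (s^2) 2 * qint (s^2) k ^ (M - 1) * (s^2) powr ((real M + 1) / 2 * (real n - real k))
       = (\<Sum>j\<le>M + 1. S_coeff M j * ((s ^ n) ^ (M + 1) * S_ratio M s j ^ k)) / S_denominator M s"
proof -
  have e: "((s^2)^k)^j * s ^ ((M + 1) * (n - k)) = (s ^ n) ^ (M + 1) * S_ratio M s j ^ k" for j
  proof -
    have ex: "(M+1)*n = (M+1)*(n-k) + (M+1)*k" using k by (simp add: add_mult_distrib2[symmetric])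
    have "(s ^ n) ^ (M + 1) = s ^ ((M+1)*n)" by (simp only: power_mult power_swap)
    also have "\<dots> = s ^ ((M + 1) * (n - k)) * s ^ ((M + 1) * k)" unfolding ex by (rule power_add)
    finally have "(s ^ n) ^ (M + 1) = s ^ ((M + 1) * (n - k)) * s ^ ((M + 1) * k)" .
    moreover have "((s^2)^k)^j = s^(2*j*k)" by (simp only: power_mult[symmetric] mult_ac)
    moreover have "(s^(2*j))^k = s^(2*j*k)" by (simp only: power_mult)
    moreover have "(s^(M+1))^k = s^((M+1)*k)" by (simp only: power_mult)
    moreover have "s^((M+1)*k) \<noteq> 0" using s by simp
    ultimately show ?thesis unfolding S_ratio_def power_divide by (simp add: field_simps)
  qed
  have "poly (S_numerator M) ((s^2) ^ k) / S_denominator M s * s ^ ((M + 1) * (n - k))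
      = (\<Sum>j\<le>M + 1. S_coeff M j * (((s^2)^k)^j * s ^ ((M + 1) * (n - k))) / S_denominator M s)"
    unfolding poly_S_numerator_eq_sum sum_divide_distrib sum_distrib_right
    by (rule sum.cong[OF refl]) (simp add: mult_ac)
  then show ?thesis unfolding S_summand_eq[OF M s k] e sum_divide_distrib .
qed

lemma S_eq_S_closed:
  assumes M: "M \<ge> 1" and s: "0 < s" "s < 1"
  shows "S M n (s ^ 2) = S_closed M s (s ^ n)"
proof -
  have "S M n (s ^ 2)
      = (\<Sum>k=1..n. (\<Sum>j\<le>M + 1. S_coeff M j * ((s ^ n) ^ (M + 1) * S_ratio M s j ^ k)) / S_denominator M s)"
    unfolding S_def by (intro sum.cong refl S_summand_expansion[OF M s]) simp
  also have "\<dots> = (\<Sum>j\<le>M + 1. S_coeff M j * ((s ^ n) ^ (M + 1) * (\<Sum>k=1..n. S_ratio M s j ^ k)))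
                    / S_denominator M s"
    unfolding sum_divide_distrib[symmetric] by (subst sum.swap) (simp only: sum_distrib_left)
  also have "\<dots> = S_closed M s (s ^ n)"
    unfolding S_closed_def by (simp only: S_coeff_geometric_sum[OF s])
  finally show ?thesis .
qed

lemma sum_atMost_reverse: "(\<Sum>j\<le>N. f j) = (\<Sum>j\<le>N. f (N - j))" for f :: "nat \<Rightarrow> real"
  using sum.atLeastAtMost_rev[of f 0 N] by (simp add: atMost_atLeast0)

lemma S_ratio_pos: "0 < s \<Longrightarrow> S_ratio M s j > 0"
  unfolding S_ratio_def by simp

lemma S_ratio_reflect:
  assumes s: "0 < s" and j: "j \<le> M + 1"
  shows "S_ratio M s (M + 1 - j) = 1 / S_ratio M s j"
proof -
  have "2 * (M + 1 - j) + 2 * j = 2 * (M + 1)" using j by simp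
  hence e: "s ^ (2 * (M + 1 - j)) * s ^ (2 * j) = s ^ (M + 1) * s ^ (M + 1)"
    by (metis power_add mult_2)
  show ?thesis unfolding S_ratio_def using s e by (simp add: field_simps)
qed

lemma S_geom_reflect:
  assumes s: "0 < s" "s < 1" and j: "j \<le> M + 1" and nm: "2 * j \<noteq> M + 1"
  shows "S_geom M s (M + 1 - j) = -1 - S_geom M s j"
proof -
  define r where "r = S_ratio M s j"
  have r0: "r > 0" unfolding r_def using S_ratio_pos s by blast
  have r1: "r \<noteq> 1" unfolding r_def using S_ratio_eq_1D[OF s] nm by blast
  have "S_geom M s (M + 1 - j) = (1 / r) / (1 - 1 / r)" unfolding S_geom_def S_ratio_reflect[OF s(1) j] r_def ..
  also have "\<dots> = 1 / (r - 1)" using r0 r1 by (simp add: field_simps)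
  also have "\<dots> = -1 - r / (1 - r)" using r1 by (simp add: field_simps)
  finally show ?thesis unfolding S_geom_def r_def .
qed

text \<open>Pair \<open>j\<close> with \<open>M + 1 - j\<close>: \<open>S_coeff\<close> is symmetric up to the sign \<open>(-1)\<^sup>M\<close> and
  \<open>S_geom M s (M + 1 - j) = -1 - S_geom M s j\<close>, so the sum equals its own negative.\<close>
lemma sum_S_coeff_S_geom_even:
  assumes M: "even M" "M \<ge> 1" and s: "0 < s" "s < 1"
  shows "(\<Sum>j\<le>M + 1. S_coeff M j * S_geom M s j) = 0"
proof -
  define T where "T = (\<Sum>j\<le>M + 1. S_coeff M j * S_geom M s j)"
  have "T = (\<Sum>j\<le>M + 1. S_coeff M (M + 1 - j) * S_geom M s (M + 1 - j))"
    unfolding T_def by (rule sum_atMost_reverse)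
  also have "\<dots> = (\<Sum>j\<le>M + 1. - S_coeff M j - S_coeff M j * S_geom M s j)"
  proof (rule sum.cong[OF refl])
    fix j assume "j \<in> {..M + 1}"
    hence j: "j \<le> M + 1" by simp
    have nm: "2 * j \<noteq> M + 1" using M by presburger
    show "S_coeff M (M + 1 - j) * S_geom M s (M + 1 - j) = - S_coeff M j - S_coeff M j * S_geom M s j"
      unfolding S_coeff_reflect[OF j] S_geom_reflect[OF s j nm] using M by (simp add: algebra_simps)
  qed
  also have "\<dots> = - (\<Sum>j\<le>M + 1. S_coeff M j) - T" unfolding T_def by (simp add: sum_subtractf sum_negf)
  also have "\<dots> = - T" using sum_S_coeff M by simp
  finally show ?thesis unfolding T_def by simp
qed

lemma sum_S_coeff_centered_S_geom:
  assumes M: "M = 2 * m + 1" "m \<ge> 1" and s: "0 < s" "s < 1"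
  shows "(\<Sum>j\<le>M + 1. S_coeff M j * (real (m + 1) - real j) * S_geom M s j) = 0"
proof -
  define T where "T = (\<Sum>j\<le>M + 1. S_coeff M j * (real (m + 1) - real j) * S_geom M s j)"
  have "T = (\<Sum>j\<le>M + 1. S_coeff M (M + 1 - j) * (real (m + 1) - real (M + 1 - j)) * S_geom M s (M + 1 - j))"
    unfolding T_def by (rule sum_atMost_reverse)
  also have "\<dots> = (\<Sum>j\<le>M + 1. - (S_coeff M j * (real (m + 1) - real j)) - S_coeff M j * (real (m + 1) - real j) * S_geom M s j)"
  proof (rule sum.cong[OF refl])
    fix j assume "j \<in> {..M + 1}"
    hence j: "j \<le> M + 1" by simp
    have w: "real (m + 1) - real (M + 1 - j) = - (real (m + 1) - real j)" using j M by (simp add: of_nat_diff)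
    have c: "S_coeff M (M + 1 - j) = - S_coeff M j" using S_coeff_reflect[OF j] M by simp
    show "S_coeff M (M + 1 - j) * (real (m + 1) - real (M + 1 - j)) * S_geom M s (M + 1 - j)
        = - (S_coeff M j * (real (m + 1) - real j)) - S_coeff M j * (real (m + 1) - real j) * S_geom M s j"
    proof (cases "2 * j = M + 1")
      case True
      hence "real (m + 1) - real j = 0" using M by simp
      thus ?thesis unfolding w c by simp
    next
      case False
      show ?thesis unfolding w c S_geom_reflect[OF s j False] by (simp add: algebra_simps)
    qed
  qed
  also have "\<dots> = - (\<Sum>j\<le>M + 1. S_coeff M j * (real (m + 1) - real j)) - T"
    unfolding T_def by (simp add: sum_subtractf sum_negf)
  also have "(\<Sum>j\<le>M + 1. S_coeff M j * (real (m + 1) - real j)) = 0"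
  proof -
    have "(\<Sum>j\<le>M + 1. S_coeff M j * (real (m + 1) - real j))
        = real (m + 1) * (\<Sum>j\<le>M + 1. S_coeff M j) - (\<Sum>j\<le>M + 1. real j * S_coeff M j)"
      by (simp add: sum_subtractf sum_distrib_left algebra_simps)
    also have "\<dots> = 0" using sum_S_coeff[of M] sum_index_S_coeff[of M] M by simp
    finally show ?thesis .
  qed
  finally have "T = - T" by simp
  hence "T = 0" by simp
  thus ?thesis unfolding T_def .
qed

lemma eventually_at_right_0_below_1: "eventually (\<lambda>s. 0 < s \<and> s < (1::real)) (at_right 0)"
  unfolding eventually_at_right_field by (rule exI[of _ 1]) auto

lemma S_geom_tendsto:
  "((\<lambda>s. S_geom M s j) \<longlongrightarrow> (if 2 * j < M + 1 then -1 else 0)) (at_right 0)"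
proof -
  have power_tendsto: "((\<lambda>s::real. s ^ d) \<longlongrightarrow> 0) (at_right 0)" if "d > 0" for d
    using tendsto_power[OF tendsto_ident_at[of 0 "{0<..}"], of d] that by simp
  consider (lt) "2 * j < M + 1" | (eq) "2 * j = M + 1" | (gt) "2 * j > M + 1" by linarith
  then show ?thesis
  proof cases
    case lt
    define d where "d = M + 1 - 2 * j"
    have "eventually (\<lambda>s. 1 / (s ^ d - 1) = S_geom M s j) (at_right 0)"
      using eventually_at_right_0_below_1
    proof eventually_elim
      case (elim s)
      have "s ^ (M + 1) = s ^ (2 * j) * s ^ d" unfolding d_def using lt by (simp add: power_add[symmetric])
      then show ?case unfolding S_geom_def S_ratio_def using elim by (simp add: field_simps)
    qed
    moreover have "((\<lambda>s::real. 1 / (s ^ d - 1)) \<longlongrightarrow> 1 / (0 - 1)) (at_right 0)"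
      by (intro tendsto_intros power_tendsto) (use lt in \<open>auto simp: d_def\<close>)
    ultimately show ?thesis using lt tendsto_cong by fastforce
  next
    text \<open>Here \<open>S_ratio M s j = 1\<close>, and \<open>S_geom\<close> is \<open>1 / 0 = 0\<close>.\<close>
    case eq
    have "eventually (\<lambda>s. 0 = S_geom M s j) (at_right 0)"
      using eventually_at_right_0_below_1 by eventually_elim (simp add: S_geom_def S_ratio_def eq)
    then show ?thesis using eq tendsto_cong[of "\<lambda>_. 0"] by fastforce
  next
    case gt
    define d where "d = 2 * j - (M + 1)"
    have "eventually (\<lambda>s. s ^ d / (1 - s ^ d) = S_geom M s j) (at_right 0)"
      using eventually_at_right_0_below_1
    proof eventually_elim
      case (elim s)
      have "2 * j = (M + 1) + d" unfolding d_def using gt by simp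
      then have "s ^ (2 * j) = s ^ (M + 1) * s ^ d" by (simp only: power_add)
      then show ?case unfolding S_geom_def S_ratio_def using elim by (simp add: field_simps)
    qed
    moreover have "((\<lambda>s::real. s ^ d / (1 - s ^ d)) \<longlongrightarrow> 0 / (1 - 0)) (at_right 0)"
      by (intro tendsto_intros power_tendsto) (use gt in \<open>auto simp: d_def\<close>)
    ultimately show ?thesis using gt tendsto_cong by fastforce
  qed
qed

lemma S_denominator_tendsto: "((\<lambda>s. S_denominator M s) \<longlongrightarrow> 1) (at_right 0)"
proof -
  have "((\<lambda>s. S_denominator M s) \<longlongrightarrow> (1 - 0 ^ 2) ^ (M - 1) * (1 - 0 ^ 4)) (at_right (0::real))"
    unfolding S_denominator_def by (intro tendsto_intros)
  thus ?thesis by simp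
qed


lemma pderiv_sum: "pderiv (\<Sum>i\<in>A. f i) = (\<Sum>i\<in>A. pderiv (f i))"
  by (induction A rule: infinite_finite_induct) (auto simp: pderiv_add)

lemma coeff_monom_mult_one_minus_power:
  "coeff (monom 1 j * [:1, -1:] ^ e :: real poly) i
     = (if j \<le> i then (-1) ^ (i - j) * real (e choose (i - j)) else 0)"
  by (simp add: coeff_monom_mult coeff_one_minus_power)

lemma coeff_expansion_one_minus_power:
  fixes b :: "nat \<Rightarrow> real"
  assumes i: "i \<le> m"
  shows "coeff (\<Sum>j\<le>m. smult ((-1) ^ j * b j) (monom 1 j * [:1, -1:] ^ (N - j))) i
       = (-1) ^ i * (\<Sum>j\<le>i. b j * real ((N - j) choose (i - j)))"
proof -
  have "coeff (\<Sum>j\<le>m. smult ((-1) ^ j * b j) (monom 1 j * [:1, -1:] ^ (N - j))) i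
      = (\<Sum>j\<le>m. (-1) ^ j * b j * (if j \<le> i then (-1) ^ (i - j) * real ((N - j) choose (i - j)) else 0))"
    by (simp add: coeff_sum coeff_monom_mult_one_minus_power)
  also have "\<dots> = (\<Sum>j\<le>i. (-1) ^ j * b j * ((-1) ^ (i - j) * real ((N - j) choose (i - j))))"
    by (rule sum.mono_neutral_cong_right) (use i in auto)
  also have "\<dots> = (\<Sum>j\<le>i. (-1) ^ i * (b j * real ((N - j) choose (i - j))))"
  proof (rule sum.cong[OF refl])
    fix j assume "j \<in> {..i}"
    then have "(-1::real) ^ j * (-1) ^ (i - j) = (-1) ^ i" by (simp add: power_add[symmetric])
    then show "(-1) ^ j * b j * ((-1) ^ (i - j) * real ((N - j) choose (i - j)))
        = (-1) ^ i * (b j * real ((N - j) choose (i - j)))"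
      by (metis (no_types, lifting) mult.assoc mult.left_commute)
  qed
  finally show ?thesis by (simp add: sum_distrib_left)
qed

lemma expansion_coeffs_eq_ballot:
  fixes a :: "nat \<Rightarrow> real"
  assumes mN: "m \<le> N"
    and h: "\<And>x::real. (\<Sum>j\<le>m. (-1) ^ j * a j * (x ^ j * (1 - x) ^ (N - j)))
                = (\<Sum>i\<le>m. S_coeff (m + N) i * x ^ i) + \<kappa> * x ^ (m + 1)"
    and j: "j \<le> m"
  shows "a j = ballot m j"
proof (rule ballot_unique[OF mN _ j])
  define Gp where "Gp = (\<Sum>j\<le>m. smult ((-1) ^ j * a j) (monom 1 j * [:1, -1:] ^ (N - j)))"
  define Lp where "Lp = (\<Sum>i\<le>m. smult (S_coeff (m + N) i) (monom 1 i)) + monom \<kappa> (m + 1)"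
  have "poly Gp = poly Lp"
    unfolding Gp_def Lp_def fun_eq_iff by (simp add: poly_sum poly_monom h)
  then have "Gp = Lp" by (simp add: poly_eq_poly_eq_iff)
  fix i assume i: "i \<le> m"
  have "coeff Lp i = S_coeff (m + N) i"
    unfolding Lp_def using i by (simp add: coeff_sum coeff_monom if_distrib cong: if_cong)
  then show "(\<Sum>j\<le>i. a j * real ((N - j) choose (i - j))) = choose_diff (m + N) i"
    using coeff_expansion_one_minus_power[OF i, of a N] \<open>Gp = Lp\<close>
    unfolding Gp_def by (simp add: S_coeff_eq_choose_diff)
qed

section \<open>Elementary facts on \<open>q\<close>-integers\<close>

lemma qint_pos: "0 < q \<Longrightarrow> q < 1 \<Longrightarrow> i \<ge> 1 \<Longrightarrow> qint q i > 0"
  unfolding qint_def by (auto simp: power_less_one_iff intro!: divide_pos_pos)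

lemma qfact_pos: "0 < q \<Longrightarrow> q < 1 \<Longrightarrow> qfact q k > 0"
  unfolding qfact_def by (rule prod_pos) (auto intro: qint_pos)

lemma qfact_Suc: "qfact q (Suc k) = qfact q k * qint q (Suc k)"
  unfolding qfact_def by (simp add: prod.cl_ivl_Suc)

lemma qint_0_left: "i \<ge> 1 \<Longrightarrow> qint 0 i = 1"
  unfolding qint_def by simp

lemma qfact_0_left: "qfact 0 k = 1"
  unfolding qfact_def by (rule prod.neutral) (simp add: qint_0_left)

lemma qint_tendsto: "(f \<longlongrightarrow> 0) F \<Longrightarrow> ((\<lambda>s. qint (f s) i) \<longlongrightarrow> qint 0 i) F"
  unfolding qint_def by (intro tendsto_intros) auto

lemma qfact_tendsto: "(f \<longlongrightarrow> 0) F \<Longrightarrow> ((\<lambda>s. qfact (f s) k) \<longlongrightarrow> qfact 0 k) F"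
  unfolding qfact_def by (intro tendsto_prod qint_tendsto)

lemma evalZ_tendsto: "(f \<longlongrightarrow> 0) F \<Longrightarrow> ((\<lambda>s. evalZ p (f s)) \<longlongrightarrow> evalZ p 0) F"
  unfolding evalZ_def by (intro tendsto_intros)

lemma square_tendsto_0: "((\<lambda>s::real. s ^ 2) \<longlongrightarrow> 0) (at_right 0)"
proof -
  have "((\<lambda>s::real. s ^ 2) \<longlongrightarrow> 0 ^ 2) (at_right 0)" by (intro tendsto_intros)
  then show ?thesis by simp
qed

text \<open>\<open>qsum q k\<close> agrees with \<open>qint q k\<close> for \<open>q \<noteq> 1\<close> but is visibly a polynomial in \<open>q\<close>.\<close>
definition qsum :: "real \<Rightarrow> nat \<Rightarrow> real" where
  "qsum q k = (\<Sum>i<k. q ^ i)"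

definition qsum_fact :: "real \<Rightarrow> nat \<Rightarrow> real" where
  "qsum_fact q k = (\<Prod>i=1..k. qsum q i)"

lemma qint_eq_qsum: "q \<noteq> 1 \<Longrightarrow> qint q k = qsum q k"
  unfolding qint_def qsum_def by (simp add: sum_gp_strict)

lemma qfact_eq_qsum_fact: "q \<noteq> 1 \<Longrightarrow> qfact q k = qsum_fact q k"
  unfolding qfact_def qsum_fact_def by (simp add: qint_eq_qsum)

lemma qsum_pos: "0 < q \<Longrightarrow> i \<ge> 1 \<Longrightarrow> qsum q i > 0"
  unfolding qsum_def by (rule sum_pos2[of _ 0]) auto

lemma qsum_fact_pos: "0 < q \<Longrightarrow> qsum_fact q k > 0"
  unfolding qsum_fact_def by (rule prod_pos) (auto intro: qsum_pos)

lemma qint_double_div_qint_2: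
  assumes "q \<noteq> 1" "q \<noteq> -1"
  shows "qint q (2 * k) / qint q 2 = qsum (q ^ 2) k"
proof -
  have "qint q (2 * k) / qint q 2 = (1 - (q ^ 2) ^ k) / (1 - q ^ 2)"
    unfolding qint_def power_mult using assms(1) by (intro divide_divide_cancel) simp
  also have "\<dots> = qsum (q ^ 2) k"
    using assms by (simp add: qsum_def sum_gp_strict power2_eq_1_iff)
  finally show ?thesis .
qed

definition triangular :: "nat \<Rightarrow> nat" where
  "triangular k = (\<Sum>i=1..k. i - 1)"

lemma triangular_Suc: "triangular (Suc k) = triangular k + k"
  unfolding triangular_def by simp

lemma triangular_mono: "k \<le> l \<Longrightarrow> triangular k \<le> triangular l"
  unfolding triangular_def by (rule sum_mono2) auto

lemma qint_inverse:
  assumes "0 < q" "q \<noteq> 1"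
  shows "qint (1 / q) j = qint q j / q ^ (j - 1)"
  using assms by (cases j) (simp_all add: qint_def field_simps power_divide)

lemma qfact_inverse:
  assumes q: "0 < q" "q \<noteq> 1"
  shows "qfact (1 / q) k = qfact q k / q ^ triangular k"
proof (induction k)
  case 0 then show ?case by (simp add: qfact_def triangular_def)
next
  case (Suc k)
  then show ?case unfolding qfact_Suc qint_inverse[OF q] triangular_Suc using q
    by (simp add: power_add field_simps)
qed

lemma qsum_inverse:
  assumes "0 < q"
  shows "qsum (1 / q) k = qsum q k / q ^ (k - 1)"
proof (cases "q = 1")
  case False
  then show ?thesis using assms qint_inverse[OF assms False, of k]
    by (simp add: qint_eq_qsum)
qed simp

text \<open>\<open>[n][n+1] = (1 - q\<^sup>n)(1 - q q\<^sup>n) / (1 - q)\<^sup>2\<close>: a polynomial in \<open>x = q\<^sup>n\<close>.\<close>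
definition qpair :: "real \<Rightarrow> real poly" where
  "qpair q = [:1, -1:] * [:1, -q:]"

lemma poly_qpair: "poly (qpair q) x = (1 - x) * (1 - q * x)"
  by (simp add: qpair_def algebra_simps)

lemma qint_mult_qint_Suc:
  assumes "q \<noteq> 1"
  shows "qint q n * qint q (n + 1) = poly (qpair q) (q ^ n) / (1 - q) ^ 2"
  using assms unfolding qint_def poly_qpair by (simp add: power2_eq_square field_simps)

lemma poly_qpair_inverse:
  assumes "0 < q"
  shows "poly (qpair (1 / q)) ((1 / q) ^ n) = poly (qpair q) (q ^ n) / (q * (q ^ n) ^ 2)"
  unfolding poly_qpair using assms by (simp add: field_simps power_divide power2_eq_square)

section \<open>The polynomials \<open>P\<^sub>m\<^sub>,\<^sub>j\<close>\<close>

definition P_rhs_value :: "nat \<Rightarrow> (nat \<Rightarrow> int poly) \<Rightarrow> nat \<Rightarrow> real \<Rightarrow> real" where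
  "P_rhs_value m P n q = (\<Sum>k=0..m. (- (q ^ n)) ^ (m - k) * qfact q k / qfact q (m+1)
                * evalZ (P (m - k)) q * (qint q n * qint q (n+1)) ^ (k+1) / qint q 2)"

lemma P_identityD:
  assumes "P_identity m P" "n \<ge> 1" "0 < q" "q < 1"
  shows "S (2 * m + 1) n q = P_rhs_value m P n q"
  using assms unfolding P_identity_def P_rhs_value_def by auto

definition P_weight :: "nat \<Rightarrow> real \<Rightarrow> nat \<Rightarrow> real" where
  "P_weight m q k = (-1) ^ (m - k) * qfact q k / (qfact q (m + 1) * (1 - q) ^ (2 * (k + 1)) * qint q 2)"

definition P_rhs :: "nat \<Rightarrow> (nat \<Rightarrow> int poly) \<Rightarrow> real \<Rightarrow> real poly" where
  "P_rhs m P q = (\<Sum>k\<le>m. smult (P_weight m q k * evalZ (P (m - k)) q) (valuation_basis (qpair q) (qpair q) m k))"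

lemma poly_P_rhs:
  "poly (P_rhs m P q) x
     = (\<Sum>k\<le>m. P_weight m q k * evalZ (P (m - k)) q * poly (valuation_basis (qpair q) (qpair q) m k) x)"
  unfolding P_rhs_def by (simp add: poly_sum)

lemma P_rhs_value_eq_poly_P_rhs:
  assumes "q \<noteq> 1"
  shows "P_rhs_value m P n q = poly (P_rhs m P q) (q ^ n)"
  unfolding poly_P_rhs P_rhs_value_def atMost_atLeast0
proof (rule sum.cong[OF refl])
  fix k
  define R where "R = poly (qpair q) (q ^ n)"
  have "(qint q n * qint q (n + 1)) ^ (k + 1) = R ^ (k + 1) / (1 - q) ^ (2 * (k + 1))"
    unfolding R_def qint_mult_qint_Suc[OF assms] by (simp only: power_divide power_mult)
  then show "(- (q ^ n)) ^ (m - k) * qfact q k / qfact q (m+1) * evalZ (P (m - k)) q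
          * (qint q n * qint q (n+1)) ^ (k+1) / qint q 2
       = P_weight m q k * evalZ (P (m - k)) q * poly (valuation_basis (qpair q) (qpair q) m k) (q ^ n)"
    unfolding poly_valuation_basis R_def[symmetric] P_weight_def power_minus[of "q ^ n"]
    by (simp add: divide_inverse inverse_mult_distrib mult_ac)
qed

definition P_lhs :: "nat \<Rightarrow> real \<Rightarrow> real poly" where
  "P_lhs m s = smult (1 / S_denominator (2 * m + 1) s)
     (\<Sum>j\<le>2 * m + 2. smult (S_coeff (2 * m + 1) j * S_geom (2 * m + 1) s j) (monom 1 (m + 1) - monom 1 j))"

lemma poly_P_lhs: "poly (P_lhs m s) x
   = (\<Sum>j\<le>2 * m + 2. S_coeff (2 * m + 1) j * S_geom (2 * m + 1) s j * (x ^ (m + 1) - x ^ j))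
       / S_denominator (2 * m + 1) s"
  unfolding P_lhs_def by (simp add: poly_sum poly_monom)

lemma S_closed_eq_P_lhs: "S_closed (2 * m + 1) s (s ^ n) = poly (P_lhs m s) ((s ^ 2) ^ n)"
proof -
  have a: "(s ^ n) ^ (2 * m + 1 + 1) = ((s ^ 2) ^ n) ^ (m + 1)"
    by (simp only: power_mult[symmetric] mult_ac) simp
  have b: "(s ^ n) ^ (2 * j) = ((s ^ 2) ^ n) ^ j" for j
    by (simp only: power_mult[symmetric] mult_ac)
  show ?thesis unfolding S_closed_def poly_P_lhs a b by simp
qed

lemma P_lhs_eq_P_rhs:
  assumes Pid: "P_identity m P" and s: "0 < s" "s < 1"
  shows "P_lhs m s = P_rhs m P (s ^ 2)"
proof -
  have q: "0 < s ^ 2" "s ^ 2 < 1" using s by (auto simp: power_less_one_iff)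
  have "P_lhs m s - P_rhs m P (s ^ 2) = 0"
  proof (rule poly_eq_0_if_vanishes_on_powers[OF q])
    fix n :: nat assume n: "n \<ge> 1"
    have "poly (P_lhs m s) ((s ^ 2) ^ n) = S_closed (2 * m + 1) s (s ^ n)"
      by (rule S_closed_eq_P_lhs[symmetric])
    also have "\<dots> = S (2 * m + 1) n (s ^ 2)"
      by (rule S_eq_S_closed[symmetric]) (use s in auto)
    also have "\<dots> = poly (P_rhs m P (s ^ 2)) ((s ^ 2) ^ n)"
      using P_identityD[OF Pid n q] P_rhs_value_eq_poly_P_rhs[of "s ^ 2"] q by simp
    finally show "poly (P_lhs m s - P_rhs m P (s ^ 2)) ((s ^ 2) ^ n) = 0" by simp
  qed
  then show ?thesis by simp
qed

lemma P_weight_tendsto: "((\<lambda>s. P_weight m (s ^ 2) k) \<longlongrightarrow> (-1) ^ (m - k)) (at_right 0)"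
proof -
  have "((\<lambda>s. P_weight m (s ^ 2) k) \<longlongrightarrow> P_weight m 0 k) (at_right 0)"
    unfolding P_weight_def
    by (intro tendsto_intros qfact_tendsto qint_tendsto square_tendsto_0)
      (auto simp: qfact_0_left qint_0_left)
  then show ?thesis by (simp add: P_weight_def qfact_0_left qint_0_left)
qed

lemma P_limit_identity:
  assumes Pid: "P_identity m P"
  shows "(\<Sum>k\<le>m. (-1) ^ (m - k) * evalZ (P (m - k)) 0 * (x ^ (m - k) * (1 - x) ^ (k + 1)))
       = (\<Sum>j\<le>m. S_coeff (2 * m + 1) j * (x ^ j - x ^ (m + 1)))"
proof -
  have lhs: "((\<lambda>s. poly (P_lhs m s) x) \<longlongrightarrow> (\<Sum>j\<le>2 * m + 2. S_coeff (2 * m + 1) j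
      * (if 2 * j < 2 * m + 1 + 1 then -1 else 0) * (x ^ (m + 1) - x ^ j)) / 1) (at_right 0)"
    unfolding poly_P_lhs by (intro tendsto_intros S_geom_tendsto S_denominator_tendsto) simp
  have rhs0: "((\<lambda>s. poly (P_rhs m P (s ^ 2)) x) \<longlongrightarrow> (\<Sum>k\<le>m. (-1) ^ (m - k) * evalZ (P (m - k)) 0
      * (x ^ (m - k) * ((1 - x) * (1 - 0 * x)) * ((1 - x) * (1 - 0 * x)) ^ k))) (at_right 0)"
    unfolding poly_P_rhs poly_valuation_basis poly_qpair
    by (intro tendsto_intros P_weight_tendsto evalZ_tendsto square_tendsto_0)
  have ev: "eventually (\<lambda>s. poly (P_lhs m s) x = poly (P_rhs m P (s ^ 2)) x) (at_right 0)"
    using eventually_at_right_0_below_1 by eventually_elim (simp add: P_lhs_eq_P_rhs[OF Pid])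
  have rhs: "((\<lambda>s. poly (P_lhs m s) x) \<longlongrightarrow> (\<Sum>k\<le>m. (-1) ^ (m - k) * evalZ (P (m - k)) 0
      * (x ^ (m - k) * ((1 - x) * (1 - 0 * x)) * ((1 - x) * (1 - 0 * x)) ^ k))) (at_right 0)"
    using rhs0 tendsto_cong[OF ev] by blast
  have "(\<Sum>j\<le>2 * m + 2. S_coeff (2 * m + 1) j * (if 2 * j < 2 * m + 1 + 1 then -1 else 0) * (x ^ (m + 1) - x ^ j))
      = (\<Sum>j\<le>m. S_coeff (2 * m + 1) j * (x ^ j - x ^ (m + 1)))"
    by (rule sum.mono_neutral_cong_right) (auto simp: algebra_simps)
  then show ?thesis
    using tendsto_unique[OF trivial_limit_at_right_real lhs rhs] by (simp add: mult_ac)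
qed

lemma P_at_0:
  assumes Pid: "P_identity m P" and j: "j \<le> m"
  shows "evalZ (P j) 0 = ballot m j"
proof -
  define a where "a j = evalZ (P j) 0" for j
  define \<kappa> where "\<kappa> = - (\<Sum>i\<le>m. S_coeff (2 * m + 1) i)"
  have "(\<Sum>j\<le>m. (-1) ^ j * a j * (x ^ j * (1 - x) ^ (m + 1 - j)))
          = (\<Sum>i\<le>m. S_coeff (m + (m + 1)) i * x ^ i) + \<kappa> * x ^ (m + 1)" for x :: real
  proof -
    have "(\<Sum>j\<le>m. (-1) ^ j * a j * (x ^ j * (1 - x) ^ (m + 1 - j)))
        = (\<Sum>k\<le>m. (-1) ^ (m - k) * a (m - k) * (x ^ (m - k) * (1 - x) ^ (k + 1)))"
      by (subst sum_atMost_reverse) (intro sum.cong, auto simp: Suc_diff_le)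
    also have "\<dots> = (\<Sum>j\<le>m. S_coeff (2 * m + 1) j * (x ^ j - x ^ (m + 1)))"
      using P_limit_identity[OF Pid, of x] unfolding a_def .
    also have "\<dots> = (\<Sum>i\<le>m. S_coeff (2 * m + 1) i * x ^ i) + \<kappa> * x ^ (m + 1)"
      unfolding \<kappa>_def by (simp add: sum_subtractf sum_distrib_right sum_distrib_left algebra_simps)
    finally show ?thesis by (simp only: mult_2 add.assoc)
  qed
  then show ?thesis
    using expansion_coeffs_eq_ballot[of m "m + 1" a \<kappa> j] j unfolding a_def by simp
qed

lemma poly_pderiv_P_lhs: "poly (pderiv (P_lhs m s)) 1
   = (\<Sum>j\<le>2 * m + 2. S_coeff (2 * m + 1) j * S_geom (2 * m + 1) s j * (real (m + 1) - real j))
       / S_denominator (2 * m + 1) s"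
  unfolding P_lhs_def pderiv_smult pderiv_sum pderiv_diff pderiv_monom
  by (simp add: poly_sum poly_monom)

text \<open>Every basis element except the one for \<open>k = 0\<close> has a double zero at \<open>x = 1\<close>.\<close>
lemma poly_pderiv_P_rhs: "poly (pderiv (P_rhs m P q)) 1 = P_weight m q 0 * evalZ (P m) q * (q - 1)"
proof -
  have r1: "poly (qpair q) 1 = 0" by (simp add: poly_qpair)
  have r2: "poly (pderiv (qpair q)) 1 = q - 1" by (simp add: qpair_def pderiv_mult pderiv_pCons algebra_simps)
  have "poly (pderiv (valuation_basis (qpair q) (qpair q) m k)) 1 = (if k = 0 then q - 1 else 0)" for k
  proof -
    have basis: "valuation_basis (qpair q) (qpair q) m k = monom 1 (m - k) * qpair q ^ Suc k"
      by (simp add: valuation_basis_def mult_ac)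
    show ?thesis unfolding basis pderiv_mult pderiv_power_Suc
      by (cases k) (simp_all add: r1 r2 poly_monom)
  qed
  then have "poly (pderiv (P_rhs m P q)) 1
      = (\<Sum>k\<le>m. P_weight m q k * evalZ (P (m - k)) q * (if k = 0 then q - 1 else 0))"
    unfolding P_rhs_def pderiv_sum pderiv_smult by (simp add: poly_sum)
  also have "\<dots> = P_weight m q 0 * evalZ (P m) q * (q - 1)"
    by (simp add: if_distrib cong: if_cong)
  finally show ?thesis .
qed

lemma P_weight_nonzero:
  assumes "0 < q" "q < 1" shows "P_weight m q k \<noteq> 0"
  using assms qfact_pos[OF assms, of k] qfact_pos[OF assms, of "m + 1"] qint_pos[OF assms, of 2]
  by (simp add: P_weight_def)

lemma P_top_eq_0:
  assumes Pid: "P_identity m P" and m: "m \<ge> 1"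
  shows "P m = 0"
proof -
  have "evalZ (P m) q = 0" if q: "0 < q" "q < 1" for q
  proof -
    define s where "s = sqrt q"
    have s: "0 < s" "s < 1" and qs: "q = s ^ 2" unfolding s_def using q by (auto simp: real_sqrt_lt_1_iff)
    have "(\<Sum>j\<le>2 * m + 2. S_coeff (2 * m + 1) j * S_geom (2 * m + 1) s j * (real (m + 1) - real j)) = 0"
      using sum_S_coeff_centered_S_geom[OF refl m s] by (simp add: mult_ac)
    then have "poly (pderiv (P_rhs m P q)) 1 = 0"
      unfolding qs P_lhs_eq_P_rhs[OF Pid s, symmetric] poly_pderiv_P_lhs by simp
    then show ?thesis using q P_weight_nonzero[OF q] unfolding poly_pderiv_P_rhs by simp
  qed
  then have "evalZ (P m) = (\<lambda>_. 0)"
    by (intro real_polynomial_function_eq_on_Ioo[of _ _ 0 1]) auto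
  then have "poly (map_poly real_of_int (P m)) = poly 0"
    by (simp add: evalZ_def[abs_def] fun_eq_iff)
  then have "map_poly real_of_int (P m) = 0"
    by (simp only: poly_eq_poly_eq_iff)
  then show ?thesis by (simp add: map_poly_eq_0_iff)
qed


lemma powr_half_odd_nat:
  assumes "0 < q" "k \<le> n"
  shows "q powr ((real (2 * m + 1) + 1) / 2 * (real n - real k)) = q ^ ((m + 1) * (n - k))"
proof -
  have "(real (2 * m + 1) + 1) / 2 * (real n - real k) = real ((m + 1) * (n - k))"
    using assms(2) by (simp add: of_nat_diff field_simps)
  then show ?thesis by (simp only: powr_realpow[OF assms(1)])
qed

definition S_odd_poly :: "nat \<Rightarrow> nat \<Rightarrow> real \<Rightarrow> real" where
  "S_odd_poly m n q = (\<Sum>k=1..n. qsum (q ^ 2) k * qsum q k ^ (2 * m) * q ^ ((m + 1) * (n - k)))"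

lemma S_odd_eq_poly:
  assumes q: "0 < q" "q \<noteq> 1"
  shows "S (2 * m + 1) n q = S_odd_poly m n q"
  unfolding S_def S_odd_poly_def
proof (rule sum.cong[OF refl])
  fix k assume "k \<in> {1..n}"
  have "qint q (2 * k) / qint q 2 = qsum (q ^ 2) k"
    using q by (intro qint_double_div_qint_2) auto
  moreover have "qint q k ^ (2 * m + 1 - 1) = qsum q k ^ (2 * m)"
    using q by (simp add: qint_eq_qsum)
  moreover have "q powr ((real (2 * m + 1) + 1) / 2 * (real n - real k)) = q ^ ((m + 1) * (n - k))"
    using q \<open>k \<in> {1..n}\<close> by (intro powr_half_odd_nat) auto
  ultimately show "qint q (2 * k) / qint q 2 * qint q k ^ (2 * m + 1 - 1)
        * q powr ((real (2 * m + 1) + 1) / 2 * (real n - real k))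
      = qsum (q ^ 2) k * qsum q k ^ (2 * m) * q ^ ((m + 1) * (n - k))"
    by simp
qed

lemma P_rhs_value_scaled:
  assumes q: "0 < q" "q \<noteq> 1"
  shows "qfact q (m + 1) * qint q 2 * P_rhs_value m P n q
       = (\<Sum>k=0..m. (- (q ^ n)) ^ (m - k) * qsum_fact q k * evalZ (P (m - k)) q
            * (qsum q n * qsum q (n + 1)) ^ (k + 1))"
proof -
  have "qfact q (m + 1) \<noteq> 0" "qint q 2 \<noteq> 0"
    using qsum_fact_pos[of q "m + 1"] qsum_pos[of q 2] q
    by (simp_all add: qfact_eq_qsum_fact qint_eq_qsum)
  then show ?thesis
    using q unfolding P_rhs_value_def sum_distrib_left
    by (intro sum.cong) (simp_all add: qfact_eq_qsum_fact qint_eq_qsum)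
qed

text \<open>Multiplied by \<open>[m+1]! [2]\<close>, both sides of the defining identity are polynomials in \<open>q\<close>, so the
  identity persists for all \<open>q > 0\<close>, \<open>q \<noteq> 1\<close>; this is what gives access to \<open>1/q\<close>.\<close>
lemma P_identity_extends:
  assumes Pid: "P_identity m P" and n: "n \<ge> 1" and q: "0 < q" "q \<noteq> 1"
  shows "S (2 * m + 1) n q = P_rhs_value m P n q"
proof (rule identity_extends_by_polynomial_multiple[OF _ _ _ P_rhs_value_scaled[symmetric] _ _ q])
  show "real_polynomial_function (\<lambda>q. qsum_fact q (m + 1) * qsum q 2 * S_odd_poly m n q)"
    "real_polynomial_function (\<lambda>q. \<Sum>k=0..m. (- (q ^ n)) ^ (m - k) * qsum_fact q k
       * evalZ (P (m - k)) q * (qsum q n * qsum q (n + 1)) ^ (k + 1))"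
    unfolding S_odd_poly_def qsum_fact_def qsum_def
    by (intro real_polynomial_function.intros(2-4) real_polynomial_function_id real_polynomial_function_sum
          real_polynomial_function_prod real_polynomial_function_power real_polynomial_function_minus
          real_polynomial_function_evalZ finite_atLeastAtMost finite_lessThan)+
next
  fix t :: real assume t: "0 < t" "t \<noteq> 1"
  show "qsum_fact t (m + 1) * qsum t 2 * S_odd_poly m n t = qfact t (m + 1) * qint t 2 * S (2 * m + 1) n t"
    unfolding S_odd_eq_poly[OF t] using t by (simp add: qfact_eq_qsum_fact qint_eq_qsum)
  show "qfact t (m + 1) * qint t 2 \<noteq> 0"
    using qsum_fact_pos[of t "m + 1"] qsum_pos[of t 2] t by (simp add: qfact_eq_qsum_fact qint_eq_qsum)
qed (use P_identityD[OF Pid n] in auto)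

lemma S_odd_poly_inverse:
  assumes q: "0 < q"
  shows "q ^ ((2 * m + 2) * n) * S_odd_poly m n (1 / q) = q ^ (2 * m + 2) * S_odd_poly m n q"
  unfolding S_odd_poly_def sum_distrib_left
proof (rule sum.cong[OF refl])
  fix k assume "k \<in> {1..n}"
  then obtain k' d where kd: "k = Suc k'" "n = k + d"
    by (metis atLeastAtMost_iff le_Suc_ex not0_implies_Suc not_one_le_zero)
  have nk: "n - k = d" "k - 1 = k'" using kd by auto
  have "(2 * m + 2) * n = (2 * m + 2) + (m + 1) * d + (m + 1) * d + 2 * k' + k' * (2 * m)"
    unfolding kd by (simp add: algebra_simps)
  then have pw: "q ^ ((2 * m + 2) * n) = q ^ (2 * m + 2) * q ^ ((m + 1) * d) * q ^ ((m + 1) * d)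
      * (q ^ 2) ^ k' * (q ^ k') ^ (2 * m)"
    by (simp only: power_add power_mult)
  have "qsum ((1 / q) ^ 2) k * qsum (1 / q) k ^ (2 * m) * (1 / q) ^ ((m + 1) * d)
      = qsum (q ^ 2) k * qsum q k ^ (2 * m) / ((q ^ 2) ^ k' * (q ^ k') ^ (2 * m) * q ^ ((m + 1) * d))"
    using q unfolding power_one_over qsum_inverse[OF q] qsum_inverse[OF zero_less_power[OF q]] nk
    by (simp add: power_divide)
  moreover have "(q ^ 2) ^ k' * (q ^ k') ^ (2 * m) * q ^ ((m + 1) * d) \<noteq> 0" using q by simp
  ultimately show "q ^ ((2 * m + 2) * n) * (qsum ((1 / q) ^ 2) k * qsum (1 / q) k ^ (2 * m)
        * (1 / q) ^ ((m + 1) * (n - k)))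
      = q ^ (2 * m + 2) * (qsum (q ^ 2) k * qsum q k ^ (2 * m) * q ^ ((m + 1) * (n - k)))"
    unfolding nk pw by (simp add: field_simps)
qed

lemma S_odd_inverse:
  assumes "0 < q" "q \<noteq> 1"
  shows "q ^ ((2 * m + 2) * n) * S (2 * m + 1) n (1 / q) = q ^ (2 * m + 2) * S (2 * m + 1) n q"
  using assms S_odd_poly_inverse[of q m n] S_odd_eq_poly[OF assms] S_odd_eq_poly[of "1 / q"]
  by simp

lemma P_weight_inverse:
  assumes q: "0 < q" "q < 1"
  shows "P_weight m (1 / q) k * q ^ triangular k
       = P_weight m q k * (q ^ triangular (m + 1) * q ^ (2 * (k + 1)) * q)"
proof -
  have q1: "q \<noteq> 1" using q by simp
  have i2: "qint (1 / q) 2 = qint q 2 / q" using qint_inverse[OF q(1) q1, of 2] by simp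
  have "(1 - 1 / q) ^ 2 = (1 - q) ^ 2 / q ^ 2" using q by (simp add: field_simps power2_eq_square)
  then have c: "(1 - 1 / q) ^ (2 * (k + 1)) = (1 - q) ^ (2 * (k + 1)) / q ^ (2 * (k + 1))"
    by (simp only: power_mult power_divide)
  have alg: "sg * (a / A) / (b / B * (C / D) * (i / q)) * A = sg * a / (b * C * i) * (B * D * q)"
    if "A \<noteq> 0" "b \<noteq> 0" "B \<noteq> 0" "C \<noteq> 0" "D \<noteq> 0" "i \<noteq> 0" for sg a A b B C D i :: real
    using that q by (simp add: field_simps)
  show ?thesis
    unfolding P_weight_def qfact_inverse[OF q(1) q1] i2 c
    by (rule alg) (use q qfact_pos[OF q, of "m + 1"] qint_pos[OF q, of 2] in auto)
qed

definition P_exponent :: "nat \<Rightarrow> nat \<Rightarrow> nat" where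
  "P_exponent m k = triangular (m + 1) + k + 2 - triangular k"

lemma P_exponent_balance:
  fixes q x :: real
  assumes k: "k \<le> m"
  shows "x ^ (2 * m + 2) * (q ^ triangular (m + 1) * q ^ (2 * (k + 1)) * q)
       = x ^ (m - k) * x ^ (m - k) * (q * x ^ 2) ^ (k + 1) * q ^ triangular k * q ^ P_exponent m k"
proof -
  have "triangular k \<le> triangular (m + 1)" using k by (intro triangular_mono) simp
  then have "triangular (m + 1) + 2 * (k + 1) + 1 = (k + 1) + triangular k + P_exponent m k"
    unfolding P_exponent_def by simp
  then have "q ^ triangular (m + 1) * q ^ (2 * (k + 1)) * q = q ^ (k + 1) * q ^ triangular k * q ^ P_exponent m k"
    by (simp only: power_add[symmetric] power_Suc2[symmetric] Suc_eq_plus1)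
  moreover have "x ^ (2 * m + 2) = x ^ (m - k) * x ^ (m - k) * x ^ (2 * (k + 1))"
    using k by (simp only: power_add[symmetric]) simp
  moreover have "(q * x ^ 2) ^ (k + 1) = q ^ (k + 1) * x ^ (2 * (k + 1))"
    by (simp only: power_mult_distrib power_mult)
  ultimately show ?thesis by (simp only: mult_ac)
qed

lemma P_weight_basis_inverse:
  assumes q: "0 < q" "q < 1" and k: "k \<le> m"
  shows "q ^ ((2 * m + 2) * n) * (P_weight m (1 / q) k
           * poly (valuation_basis (qpair (1 / q)) (qpair (1 / q)) m k) ((1 / q) ^ n))
       = P_weight m q k * q ^ P_exponent m k * poly (valuation_basis (qpair q) (qpair q) m k) (q ^ n)"
proof -
  define x where "x = q ^ n"
  define d where "d = m - k"
  define Y where "Y = q * x ^ 2"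
  define R where "R = poly (qpair q) x"
  have nz: "x \<noteq> 0" "Y \<noteq> 0" "q ^ triangular k \<noteq> 0" unfolding x_def Y_def using q by auto
  have w: "P_weight m (1 / q) k
      = P_weight m q k * (q ^ triangular (m + 1) * q ^ (2 * (k + 1)) * q) / q ^ triangular k"
    using P_weight_inverse[OF q, of m k] nz by (simp add: field_simps)
  have b: "poly (valuation_basis (qpair (1 / q)) (qpair (1 / q)) m k) ((1 / q) ^ n)
      = (1 / x) ^ d * (R / Y) ^ (k + 1)"
    unfolding poly_valuation_basis poly_qpair_inverse[OF q(1)] x_def Y_def R_def d_def
    by (simp add: power_one_over)
  have x: "q ^ ((2 * m + 2) * n) = x ^ (2 * m + 2)"
    unfolding x_def by (simp only: power_mult[symmetric] mult.commute)
  have pw: "x ^ (2 * m + 2) * (q ^ triangular (m + 1) * q ^ (2 * (k + 1)) * q)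
      = x ^ d * x ^ d * Y ^ (k + 1) * q ^ triangular k * q ^ P_exponent m k"
    unfolding d_def Y_def by (rule P_exponent_balance[OF k])
  have "q ^ ((2 * m + 2) * n) * (P_weight m (1 / q) k
           * poly (valuation_basis (qpair (1 / q)) (qpair (1 / q)) m k) ((1 / q) ^ n))
      = q ^ ((2 * m + 2) * n) * (P_weight m (1 / q) k * ((1 / x) ^ d * (R / Y) ^ (k + 1)))"
    by (simp only: b)
  also have "\<dots> = P_weight m q k * (x ^ (2 * m + 2) * (q ^ triangular (m + 1) * q ^ (2 * (k + 1)) * q))
          * R ^ (k + 1) / (x ^ d * Y ^ (k + 1) * q ^ triangular k)"
    unfolding w x by (simp add: power_one_over power_divide field_simps)
  also have "\<dots> = P_weight m q k * q ^ P_exponent m k * (x ^ d * R ^ (k + 1))"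
    unfolding pw using nz q by (simp add: field_simps)
  also have "x ^ d * R ^ (k + 1) = poly (valuation_basis (qpair q) (qpair q) m k) (q ^ n)"
    unfolding poly_valuation_basis x_def R_def d_def by simp
  finally show ?thesis .
qed

text \<open>Both expansions of \<open>q\<^bsup>2m+2\<^esup> S\<^sub>2\<^sub>m\<^sub>+\<^sub>1\<^sub>,\<^sub>n(q) = q\<^bsup>(2m+2)n\<^esup> S\<^sub>2\<^sub>m\<^sub>+\<^sub>1\<^sub>,\<^sub>n(1/q)\<close>
  in the basis \<open>x\<^bsup>m-k\<^esup> ((1 - x)(1 - q x))\<^bsup>k+1\<^esup>\<close> at \<open>x = q\<^sup>n\<close> must have the same coefficients.\<close>
lemma P_reciprocal:
  assumes Pid: "P_identity m P" and k: "k \<le> m" and q: "0 < q" "q < 1"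
  shows "q ^ (2 * m + 2) * evalZ (P (m - k)) q = q ^ P_exponent m k * evalZ (P (m - k)) (1 / q)"
proof -
  have q1: "q \<noteq> 1" "1 / q \<noteq> 1" "0 < 1 / q" using q by auto
  let ?B = "\<lambda>q k. valuation_basis (qpair q) (qpair q) m k"
  have "P_weight m q k * (q ^ (2 * m + 2) * evalZ (P (m - k)) q)
      = P_weight m q k * (q ^ P_exponent m k * evalZ (P (m - k)) (1 / q))"
  proof (rule valuation_basis_expansion_unique[OF q _ _ _ k])
    fix n :: nat assume n: "n \<ge> 1"
    have "(\<Sum>k\<le>m. P_weight m q k * (q ^ (2 * m + 2) * evalZ (P (m - k)) q) * poly (?B q k) (q ^ n))
        = q ^ (2 * m + 2) * S (2 * m + 1) n q"
      using P_identityD[OF Pid n q] P_rhs_value_eq_poly_P_rhs[OF q1(1)]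
      by (simp add: poly_P_rhs sum_distrib_left mult_ac)
    also have "\<dots> = q ^ ((2 * m + 2) * n) * S (2 * m + 1) n (1 / q)"
      by (rule S_odd_inverse[OF q(1) q1(1), symmetric])
    also have "\<dots> = q ^ ((2 * m + 2) * n) * poly (P_rhs m P (1 / q)) ((1 / q) ^ n)"
      using P_identity_extends[OF Pid n q1(3,2)] P_rhs_value_eq_poly_P_rhs[OF q1(2)] by simp
    also have "\<dots> = (\<Sum>k\<le>m. P_weight m q k * (q ^ P_exponent m k * evalZ (P (m - k)) (1 / q))
                        * poly (?B q k) (q ^ n))"
      unfolding poly_P_rhs sum_distrib_left
    proof (rule sum.cong[OF refl])
      fix k assume "k \<in> {..m}"
      then show "q ^ ((2 * m + 2) * n) * (P_weight m (1 / q) k * evalZ (P (m - k)) (1 / q)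
            * poly (?B (1 / q) k) ((1 / q) ^ n))
          = P_weight m q k * (q ^ P_exponent m k * evalZ (P (m - k)) (1 / q)) * poly (?B q k) (q ^ n)"
        using P_weight_basis_inverse[OF q, of k m n] by (simp add: mult_ac)
    qed
    finally show "(\<Sum>k\<le>m. P_weight m q k * (q ^ (2 * m + 2) * evalZ (P (m - k)) q) * poly (?B q k) (q ^ n))
        = (\<Sum>k\<le>m. P_weight m q k * (q ^ P_exponent m k * evalZ (P (m - k)) (1 / q)) * poly (?B q k) (q ^ n))" .
  qed (simp_all add: poly_qpair)
  then show ?thesis using P_weight_nonzero[OF q] by simp
qed

text \<open>For \<open>k = m \<ge> 1\<close> the ballot number vanishes; then \<open>P m = 0\<close> is used instead.\<close>
lemma P_symmetric:
  assumes Pid: "P_identity m P" and k: "k \<le> m"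
  shows "symmetric_coeffs (P k)"
proof (cases "k = m \<and> m \<ge> 1")
  case True
  then show ?thesis using P_top_eq_0[OF Pid] by (simp add: symmetric_coeffs_def)
next
  case False
  then have "ballot m k \<noteq> 0" using k ballot_pos[of k m] by (auto simp: ballot_def)
  then have "poly (map_poly real_of_int (P k)) 0 \<noteq> 0"
    using P_at_0[OF Pid k] by (simp add: evalZ_def)
  then have "symmetric_coeffs (map_poly real_of_int (P k))"
  proof (rule symmetric_coeffs_if_reciprocal)
    fix q :: real assume q: "0 < q" "q < 1"
    have "m - (m - k) = k" using k by simp
    then show "q ^ (2 * m + 2) * poly (map_poly real_of_int (P k)) q
        = q ^ P_exponent m (m - k) * poly (map_poly real_of_int (P k)) (1 / q)"
      using P_reciprocal[OF Pid _ q, of "m - k"] unfolding evalZ_def by simp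
  qed
  then show ?thesis by (simp add: symmetric_coeffs_map_poly_of_int_iff)
qed


section \<open>The polynomials \<open>Q\<^sub>m\<^sub>,\<^sub>j\<close>\<close>

text \<open>All half-integer powers of \<open>q\<close> are integer powers of \<open>t = q\<^bsup>1/2\<^esup>\<close>; \<open>Q_prod m t j\<close> is the
  product \<open>\<Prod>\<^sub>i\<^sub>=\<^sub>0\<^sub>.\<^sub>.\<^sub>j (1 - q\<^bsup>m-i+1/2\<^esup>)\<close> of the defining identity.\<close>
definition Q_prod :: "nat \<Rightarrow> real \<Rightarrow> nat \<Rightarrow> real" where
  "Q_prod m t j = (\<Prod>i=0..j. (1 - t ^ (2 * (m - i) + 1)))"

definition Q_rhs_value :: "nat \<Rightarrow> (nat \<Rightarrow> int poly) \<Rightarrow> nat \<Rightarrow> real \<Rightarrow> real" where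
  "Q_rhs_value m Q n t = (1 - t ^ (2 * n + 1)) *
          (\<Sum>k=0..m. (- ((t ^ 2) ^ n)) ^ (m - k) * (1 - t) ^ (m - k)
                * evalZ (Q (m - k)) t / Q_prod m t (m - k)
                * (qint (t ^ 2) n * qint (t ^ 2) (n + 1)) ^ k / qint (t ^ 2) 2)"

lemma square_powr_half:
  fixes t :: real
  assumes t: "0 < t" shows "(t ^ 2) powr (real a + 1 / 2) = t ^ (2 * a + 1)"
proof -
  have "(t ^ 2) powr (real a + 1 / 2) = (t powr 2) powr (real a + 1 / 2)"
    using t by (simp add: powr_numeral)
  also have "\<dots> = t powr (2 * (real a + 1 / 2))" by (simp add: powr_powr)
  also have "2 * (real a + 1 / 2) = real (2 * a + 1)" by simp
  also have "t powr real (2 * a + 1) = t ^ (2 * a + 1)" by (rule powr_realpow[OF t])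
  finally show ?thesis .
qed

lemma Q_identityD:
  assumes Qid: "Q_identity m Q" and n: "n \<ge> 1" and t: "0 < t" "t < 1"
  shows "S (2 * m) n (t ^ 2) = Q_rhs_value m Q n t"
proof -
  have "0 < t ^ 2" "t ^ 2 < 1" using t by (auto simp: power_less_one_iff)
  then have "S (2 * m) n (t ^ 2) = (1 - (t ^ 2) powr (real n + 1/2)) *
          (\<Sum>k=0..m. (- ((t ^ 2) ^ n)) ^ (m - k) * (1 - (t ^ 2) powr (1/2)) ^ (m - k)
                * evalZ (Q (m - k)) ((t ^ 2) powr (1/2))
                / (\<Prod>i=0..m-k. (1 - (t ^ 2) powr (real (m - i) + 1/2)))
                * (qint (t ^ 2) n * qint (t ^ 2) (n+1)) ^ k / qint (t ^ 2) 2)"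
    using Qid n unfolding Q_identity_def by blast
  also have "(t ^ 2) powr (1 / 2) = t" using square_powr_half[OF t(1), of 0] by simp
  finally show ?thesis unfolding square_powr_half[OF t(1)] Q_rhs_value_def Q_prod_def .
qed

definition Q_weight :: "nat \<Rightarrow> real \<Rightarrow> nat \<Rightarrow> real" where
  "Q_weight m t k = (-1) ^ (m - k) * (1 - t) ^ (m - k)
     / (Q_prod m t (m - k) * (1 - t ^ 2) ^ (2 * k) * qint (t ^ 2) 2)"

definition Q_rhs :: "nat \<Rightarrow> (nat \<Rightarrow> int poly) \<Rightarrow> real \<Rightarrow> real poly" where
  "Q_rhs m Q t = (\<Sum>k\<le>m. smult (Q_weight m t k * evalZ (Q (m - k)) t)
                   (valuation_basis [:1, -t:] (qpair (t ^ 2)) m k))"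

lemma poly_Q_rhs:
  "poly (Q_rhs m Q t) x
     = (\<Sum>k\<le>m. Q_weight m t k * evalZ (Q (m - k)) t * poly (valuation_basis [:1, -t:] (qpair (t ^ 2)) m k) x)"
  unfolding Q_rhs_def by (simp add: poly_sum)

lemma Q_rhs_value_eq_poly_Q_rhs:
  assumes t: "0 < t" "t \<noteq> 1"
  shows "Q_rhs_value m Q n t = poly (Q_rhs m Q t) ((t ^ 2) ^ n)"
proof -
  define x where "x = (t ^ 2) ^ n"
  define R where "R = poly (qpair (t ^ 2)) x"
  have t2: "t ^ 2 \<noteq> 1" using t by (auto simp: power2_eq_1_iff)
  have e: "(qint (t ^ 2) n * qint (t ^ 2) (n + 1)) ^ k = R ^ k / (1 - t ^ 2) ^ (2 * k)" for k
    unfolding R_def x_def qint_mult_qint_Suc[OF t2] by (simp only: power_divide power_mult)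
  have tx: "t ^ (2 * n + 1) = t * x"
    unfolding x_def by (simp add: power_mult)
  show ?thesis
    unfolding Q_rhs_value_def poly_Q_rhs x_def[symmetric] tx sum_distrib_left atMost_atLeast0
  proof (rule sum.cong[OF refl])
    fix k
    show "(1 - t * x) * ((- x) ^ (m - k) * (1 - t) ^ (m - k) * evalZ (Q (m - k)) t / Q_prod m t (m - k)
            * (qint (t ^ 2) n * qint (t ^ 2) (n + 1)) ^ k / qint (t ^ 2) 2)
        = Q_weight m t k * evalZ (Q (m - k)) t * poly (valuation_basis [:1, -t:] (qpair (t ^ 2)) m k) x"
      unfolding e Q_weight_def power_minus[of x] poly_valuation_basis R_def
      by (simp add: divide_inverse inverse_mult_distrib mult_ac)
  qed
qed

text \<open>For even \<open>M\<close> the term \<open>X\<^bsup>M+1\<^esup>\<close> of the closed form, which is not a polynomial in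
  \<open>x = X\<^sup>2\<close>, cancels.\<close>
definition Q_lhs :: "nat \<Rightarrow> real \<Rightarrow> real poly" where
  "Q_lhs m t = smult (- 1 / S_denominator (2 * m) t)
     (\<Sum>j\<le>2 * m + 1. smult (S_coeff (2 * m) j * S_geom (2 * m) t j) (monom 1 j))"

lemma poly_Q_lhs: "poly (Q_lhs m t) x
    = - 1 / S_denominator (2 * m) t * (\<Sum>j\<le>2 * m + 1. S_coeff (2 * m) j * S_geom (2 * m) t j * x ^ j)"
  unfolding Q_lhs_def by (simp add: poly_sum poly_monom)

lemma S_closed_eq_Q_lhs:
  assumes m: "m \<ge> 1" and t: "0 < t" "t < 1"
  shows "S_closed (2 * m) t (t ^ n) = poly (Q_lhs m t) ((t ^ 2) ^ n)"
proof -
  have z: "(\<Sum>j\<le>2 * m + 1. S_coeff (2 * m) j * S_geom (2 * m) t j) = 0"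
    by (rule sum_S_coeff_S_geom_even) (use m t in auto)
  have b: "(t ^ n) ^ (2 * j) = ((t ^ 2) ^ n) ^ j" for j
    by (simp only: power_mult power_swap[of t n 2])
  have "S_closed (2 * m) t (t ^ n)
      = ((t ^ n) ^ (2 * m + 1) * (\<Sum>j\<le>2 * m + 1. S_coeff (2 * m) j * S_geom (2 * m) t j)
          - (\<Sum>j\<le>2 * m + 1. S_coeff (2 * m) j * S_geom (2 * m) t j * (t ^ n) ^ (2 * j)))
        / S_denominator (2 * m) t"
    unfolding S_closed_def sum_distrib_left sum_subtractf[symmetric] by (simp add: algebra_simps)
  also have "\<dots> = - 1 / S_denominator (2 * m) t
      * (\<Sum>j\<le>2 * m + 1. S_coeff (2 * m) j * S_geom (2 * m) t j * (t ^ n) ^ (2 * j))"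
  proof -
    have g: "(A * 0 - B) / D = - 1 / D * B" for A B D :: real by simp
    show ?thesis unfolding z by (rule g)
  qed
  also have "\<dots> = poly (Q_lhs m t) ((t ^ 2) ^ n)"
    unfolding poly_Q_lhs b ..
  finally show ?thesis .
qed

lemma Q_lhs_eq_Q_rhs:
  assumes Qid: "Q_identity m Q" and m: "m \<ge> 1" and t: "0 < t" "t < 1"
  shows "Q_lhs m t = Q_rhs m Q t"
proof -
  have q: "0 < t ^ 2" "t ^ 2 < 1" using t by (auto simp: power_less_one_iff)
  have "Q_lhs m t - Q_rhs m Q t = 0"
  proof (rule poly_eq_0_if_vanishes_on_powers[OF q])
    fix n :: nat assume n: "n \<ge> 1"
    have "poly (Q_lhs m t) ((t ^ 2) ^ n) = S_closed (2 * m) t (t ^ n)"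
      by (rule S_closed_eq_Q_lhs[OF m t, symmetric])
    also have "\<dots> = S (2 * m) n (t ^ 2)"
      by (rule S_eq_S_closed[symmetric]) (use t m in auto)
    also have "\<dots> = poly (Q_rhs m Q t) ((t ^ 2) ^ n)"
      using Q_identityD[OF Qid n t] Q_rhs_value_eq_poly_Q_rhs[of t] t by simp
    finally show "poly (Q_lhs m t - Q_rhs m Q t) ((t ^ 2) ^ n) = 0" by simp
  qed
  then show ?thesis by simp
qed

lemma Q_weight_tendsto: "((\<lambda>t. Q_weight m t k) \<longlongrightarrow> (-1) ^ (m - k)) (at_right 0)"
proof -
  have "((\<lambda>t. qint (t ^ 2) 2) \<longlongrightarrow> qint (0 ^ 2) 2) (at_right (0::real))"
    using qint_tendsto[OF square_tendsto_0, of 2] by simp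
  then have "((\<lambda>t. Q_weight m t k) \<longlongrightarrow> Q_weight m 0 k) (at_right 0)"
    unfolding Q_weight_def Q_prod_def
    by (intro tendsto_intros tendsto_prod tendsto_ident_at) (auto simp: qint_0_left)
  then show ?thesis by (simp add: Q_weight_def Q_prod_def qint_0_left)
qed

lemma Q_limit_identity:
  assumes Qid: "Q_identity m Q" and m: "m \<ge> 1"
  shows "(\<Sum>k\<le>m. (-1) ^ (m - k) * evalZ (Q (m - k)) 0 * (x ^ (m - k) * (1 - x) ^ k))
       = (\<Sum>j\<le>m. S_coeff (2 * m) j * x ^ j)"
proof -
  have lhs: "((\<lambda>t. poly (Q_lhs m t) x) \<longlongrightarrow> - 1 / 1 * (\<Sum>j\<le>2 * m + 1. S_coeff (2 * m) j
      * (if 2 * j < 2 * m + 1 then -1 else 0) * x ^ j)) (at_right 0)"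
    unfolding poly_Q_lhs by (intro tendsto_intros S_geom_tendsto S_denominator_tendsto) simp
  have lin: "poly [:1, -t:] x = 1 - t * x" for t by simp
  have rhs0: "((\<lambda>t. poly (Q_rhs m Q t) x) \<longlongrightarrow> (\<Sum>k\<le>m. (-1) ^ (m - k) * evalZ (Q (m - k)) 0
      * (x ^ (m - k) * (1 - 0 * x) * ((1 - x) * (1 - 0 ^ 2 * x)) ^ k))) (at_right 0)"
    unfolding poly_Q_rhs poly_valuation_basis poly_qpair lin
    by (intro tendsto_intros Q_weight_tendsto evalZ_tendsto tendsto_ident_at[where s = "{0<..}"])
  have ev: "eventually (\<lambda>t. poly (Q_lhs m t) x = poly (Q_rhs m Q t) x) (at_right 0)"
    using eventually_at_right_0_below_1 by eventually_elim (simp add: Q_lhs_eq_Q_rhs[OF Qid m])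
  have rhs: "((\<lambda>t. poly (Q_lhs m t) x) \<longlongrightarrow> (\<Sum>k\<le>m. (-1) ^ (m - k) * evalZ (Q (m - k)) 0
      * (x ^ (m - k) * (1 - 0 * x) * ((1 - x) * (1 - 0 ^ 2 * x)) ^ k))) (at_right 0)"
    using rhs0 tendsto_cong[OF ev] by blast
  have "(\<Sum>j\<le>2 * m + 1. S_coeff (2 * m) j * (if 2 * j < 2 * m + 1 then -1 else 0) * x ^ j)
      = (\<Sum>j\<le>m. S_coeff (2 * m) j * (-1) * x ^ j)"
    by (rule sum.mono_neutral_cong_right) auto
  then show ?thesis
    using tendsto_unique[OF trivial_limit_at_right_real lhs rhs] by (simp add: sum_negf mult_ac)
qed

lemma Q_at_0:
  assumes Qid: "Q_identity m Q" and m: "m \<ge> 1" and j: "j \<le> m"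
  shows "evalZ (Q j) 0 = ballot m j"
proof -
  define a where "a j = evalZ (Q j) 0" for j
  have "(\<Sum>j\<le>m. (-1) ^ j * a j * (x ^ j * (1 - x) ^ (m - j)))
          = (\<Sum>i\<le>m. S_coeff (m + m) i * x ^ i) + 0 * x ^ (m + 1)" for x :: real
  proof -
    have "(\<Sum>j\<le>m. (-1) ^ j * a j * (x ^ j * (1 - x) ^ (m - j)))
        = (\<Sum>k\<le>m. (-1) ^ (m - k) * a (m - k) * (x ^ (m - k) * (1 - x) ^ k))"
      by (subst sum_atMost_reverse) (intro sum.cong, auto)
    also have "\<dots> = (\<Sum>j\<le>m. S_coeff (2 * m) j * x ^ j)"
      using Q_limit_identity[OF Qid m, of x] unfolding a_def .
    finally show ?thesis by (simp add: mult_2)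
  qed
  then show ?thesis
    using expansion_coeffs_eq_ballot[of m m a 0 j] j unfolding a_def by simp
qed


lemma Q_prod_nonzero:
  assumes "0 < t" "t \<noteq> 1"
  shows "Q_prod m t j \<noteq> 0"
proof -
  have "t ^ (2 * (m - i) + 1) \<noteq> 1" for i
    using assms power_eq_1_iff[of t "2 * (m - i) + 1"] by auto
  then show ?thesis unfolding Q_prod_def by (simp add: prod_zero_iff del: power_Suc)
qed

lemma Q_prod_split:
  assumes "k \<le> m"
  shows "Q_prod m t m = Q_prod m t (m - k) * (\<Prod>i=m-k+1..m. (1 - t ^ (2 * (m - i) + 1)))"
  unfolding Q_prod_def using prod.ub_add_nat[of 0 "m - k" "\<lambda>i. 1 - t ^ (2 * (m - i) + 1)" k] assms
  by simp

definition S_even_poly :: "nat \<Rightarrow> nat \<Rightarrow> real \<Rightarrow> real" where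
  "S_even_poly m n t = (\<Sum>k=1..n. qsum ((t ^ 2) ^ 2) k * qsum (t ^ 2) k ^ (2 * m - 1) * t ^ ((2 * m + 1) * (n - k)))"

lemma S_even_eq_poly:
  assumes t: "0 < t" "t \<noteq> 1"
  shows "S (2 * m) n (t ^ 2) = S_even_poly m n t"
  unfolding S_def S_even_poly_def
proof (rule sum.cong[OF refl])
  fix k assume k: "k \<in> {1..n}"
  have q: "t ^ 2 \<noteq> 1" "t ^ 2 \<noteq> -1"
    using t by (auto simp: power2_eq_1_iff) (use zero_le_power2[of t] in linarith)
  have "qint (t ^ 2) (2 * k) / qint (t ^ 2) 2 = qsum ((t ^ 2) ^ 2) k"
    using q by (rule qint_double_div_qint_2)
  moreover have "qint (t ^ 2) k ^ (2 * m - 1) = qsum (t ^ 2) k ^ (2 * m - 1)"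
    using q by (simp add: qint_eq_qsum)
  moreover have "(t ^ 2) powr ((real (2 * m) + 1) / 2 * (real n - real k)) = t ^ ((2 * m + 1) * (n - k))"
    using k t by (intro square_powr_half_nat) auto
  ultimately show "qint (t ^ 2) (2 * k) / qint (t ^ 2) 2 * qint (t ^ 2) k ^ (2 * m - 1)
        * (t ^ 2) powr ((real (2 * m) + 1) / 2 * (real n - real k))
      = qsum ((t ^ 2) ^ 2) k * qsum (t ^ 2) k ^ (2 * m - 1) * t ^ ((2 * m + 1) * (n - k))"
    by simp
qed

lemma Q_rhs_value_scaled:
  assumes t: "0 < t" "t \<noteq> 1"
  shows "qint (t ^ 2) 2 * Q_prod m t m * Q_rhs_value m Q n t
       = (1 - t ^ (2 * n + 1)) * (\<Sum>k=0..m. (- ((t ^ 2) ^ n)) ^ (m - k) * (1 - t) ^ (m - k)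
            * evalZ (Q (m - k)) t * (\<Prod>i=m-k+1..m. (1 - t ^ (2 * (m - i) + 1)))
            * (qsum (t ^ 2) n * qsum (t ^ 2) (n + 1)) ^ k)"
proof -
  have t2: "t ^ 2 \<noteq> 1" using t by (auto simp: power2_eq_1_iff)
  then have nz: "qint (t ^ 2) 2 \<noteq> 0" using qsum_pos[of "t ^ 2" 2] t by (simp add: qint_eq_qsum)
  show ?thesis
    unfolding Q_rhs_value_def sum_distrib_left mult.left_commute[of _ "1 - t ^ (2 * n + 1)"]
  proof (intro arg_cong[where f="\<lambda>x. (1 - t ^ (2 * n + 1)) * x"] sum.cong[OF refl])
    fix k assume "k \<in> {0..m}"
    then show "qint (t ^ 2) 2 * Q_prod m t m * ((- ((t ^ 2) ^ n)) ^ (m - k) * (1 - t) ^ (m - k)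
            * evalZ (Q (m - k)) t / Q_prod m t (m - k)
            * (qint (t ^ 2) n * qint (t ^ 2) (n + 1)) ^ k / qint (t ^ 2) 2)
        = (- ((t ^ 2) ^ n)) ^ (m - k) * (1 - t) ^ (m - k) * evalZ (Q (m - k)) t
            * (\<Prod>i=m-k+1..m. (1 - t ^ (2 * (m - i) + 1))) * (qsum (t ^ 2) n * qsum (t ^ 2) (n + 1)) ^ k"
      using Q_prod_nonzero[OF t, of m "m - k"] nz Q_prod_split[of k m t]
      by (simp add: qint_eq_qsum[OF t2])
  qed
qed

lemma Q_identity_extends:
  assumes Qid: "Q_identity m Q" and n: "n \<ge> 1" and t: "0 < t" "t \<noteq> 1"
  shows "S (2 * m) n (t ^ 2) = Q_rhs_value m Q n t"
proof (rule identity_extends_by_polynomial_multiple[OF _ _ _ Q_rhs_value_scaled[symmetric] _ _ t])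
  show "real_polynomial_function (\<lambda>t. qsum (t ^ 2) 2 * Q_prod m t m * S_even_poly m n t)"
    "real_polynomial_function (\<lambda>t. (1 - t ^ (2 * n + 1)) * (\<Sum>k=0..m. (- ((t ^ 2) ^ n)) ^ (m - k)
       * (1 - t) ^ (m - k) * evalZ (Q (m - k)) t * (\<Prod>i=m-k+1..m. (1 - t ^ (2 * (m - i) + 1)))
       * (qsum (t ^ 2) n * qsum (t ^ 2) (n + 1)) ^ k))"
    unfolding S_even_poly_def Q_prod_def qsum_def
    by (intro real_polynomial_function.intros(2-4) real_polynomial_function_id real_polynomial_function_sum
          real_polynomial_function_prod real_polynomial_function_power real_polynomial_function_diff
          real_polynomial_function_minus real_polynomial_function_evalZ finite_atLeastAtMost finite_lessThan)+
next
  fix u :: real assume u: "0 < u" "u \<noteq> 1"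
  then have u2: "u ^ 2 \<noteq> 1" by (auto simp: power2_eq_1_iff)
  then show "qsum (u ^ 2) 2 * Q_prod m u m * S_even_poly m n u = qint (u ^ 2) 2 * Q_prod m u m * S (2 * m) n (u ^ 2)"
    unfolding S_even_eq_poly[OF u] by (simp add: qint_eq_qsum)
  show "qint (u ^ 2) 2 * Q_prod m u m \<noteq> 0"
    using u2 qsum_pos[of "u ^ 2" 2] Q_prod_nonzero[OF u] u by (simp add: qint_eq_qsum)
qed (use Q_identityD[OF Qid n] in auto)


lemma S_even_poly_inverse:
  assumes t: "0 < t" and m: "m \<ge> 1"
  shows "t ^ (2 * (2 * m + 1) * n) * S_even_poly m n (1 / t) = t ^ (2 * (2 * m + 1)) * S_even_poly m n t"
  unfolding S_even_poly_def sum_distrib_left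
proof (rule sum.cong[OF refl])
  fix k assume "k \<in> {1..n}"
  then obtain k' d where kd: "k = Suc k'" "n = k + d"
    by (metis atLeastAtMost_iff le_Suc_ex not0_implies_Suc not_one_le_zero)
  have nk: "n - k = d" "k - 1 = k'" using kd by auto
  define M where "M = 2 * m + 1"
  have "2 * M * n = 2 * M + M * d + M * d + 4 * k' + 2 * k' * (2 * m - 1)"
    unfolding kd M_def using m by (cases m) (simp_all add: algebra_simps)
  then have pw: "t ^ (2 * M * n) = t ^ (2 * M) * t ^ (M * d) * t ^ (M * d) * (t ^ 4) ^ k'
      * ((t ^ 2) ^ k') ^ (2 * m - 1)"
    by (simp only: power_add power_mult)
  have a: "((1 / t) ^ 2) ^ 2 = 1 / t ^ 4" "(1 / t) ^ 2 = 1 / t ^ 2" "(t ^ 2) ^ 2 = t ^ 4"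
    by (simp_all add: power_divide power_mult[symmetric])
  have "qsum (((1 / t) ^ 2) ^ 2) k * qsum ((1 / t) ^ 2) k ^ (2 * m - 1) * (1 / t) ^ (M * d)
      = qsum (t ^ 4) k * qsum (t ^ 2) k ^ (2 * m - 1) / ((t ^ 4) ^ k' * ((t ^ 2) ^ k') ^ (2 * m - 1) * t ^ (M * d))"
    unfolding a(1) unfolding a(2) qsum_inverse[OF zero_less_power[OF t, of 2]]
      qsum_inverse[OF zero_less_power[OF t, of 4]] nk
    using t by (simp add: power_divide)
  moreover have "(t ^ 4) ^ k' * ((t ^ 2) ^ k') ^ (2 * m - 1) * t ^ (M * d) \<noteq> 0" using t by simp
  ultimately show "t ^ (2 * (2 * m + 1) * n) * (qsum (((1 / t) ^ 2) ^ 2) k * qsum ((1 / t) ^ 2) k ^ (2 * m - 1)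
        * (1 / t) ^ ((2 * m + 1) * (n - k)))
      = t ^ (2 * (2 * m + 1)) * (qsum ((t ^ 2) ^ 2) k * qsum (t ^ 2) k ^ (2 * m - 1) * t ^ ((2 * m + 1) * (n - k)))"
    unfolding M_def[symmetric] nk a(3) pw by (simp add: field_simps)
qed

lemma S_even_inverse:
  assumes "0 < t" "t \<noteq> 1" "m \<ge> 1"
  shows "t ^ (2 * (2 * m + 1) * n) * S (2 * m) n ((1 / t) ^ 2) = t ^ (2 * (2 * m + 1)) * S (2 * m) n (t ^ 2)"
  using assms S_even_poly_inverse[of t m n] S_even_eq_poly[of t m n] S_even_eq_poly[of "1 / t" m n]
  by simp

definition odd_sum :: "nat \<Rightarrow> nat \<Rightarrow> nat" where
  "odd_sum m j = (\<Sum>i=0..j. 2 * (m - i) + 1)"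

lemma Q_prod_inverse:
  assumes t: "0 < t"
  shows "Q_prod m (1 / t) j = (-1) ^ (j + 1) * Q_prod m t j / t ^ odd_sum m j"
proof -
  have f: "1 - (1 / t) ^ a = - (1 - t ^ a) / t ^ a" for a using t by (simp add: field_simps power_divide)
  show ?thesis
proof (induction j)
  case 0
  show ?case unfolding Q_prod_def odd_sum_def atLeastAtMost_singleton prod.insert_if sum.insert_if f
    by simp
next
  case (Suc j)
  have "Q_prod m (1 / t) (Suc j) = Q_prod m (1 / t) j * (1 - (1 / t) ^ (2 * (m - Suc j) + 1))"
    unfolding Q_prod_def by simp
  also have "\<dots> = (-1) ^ (Suc j + 1) * (Q_prod m t j * (1 - t ^ (2 * (m - Suc j) + 1)))
      / (t ^ odd_sum m j * t ^ (2 * (m - Suc j) + 1))"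
    unfolding Suc.IH f using t by (simp add: field_simps)
  also have "\<dots> = (-1) ^ (Suc j + 1) * Q_prod m t (Suc j) / t ^ odd_sum m (Suc j)"
    unfolding Q_prod_def odd_sum_def by (simp add: power_add)
  finally show ?case .
qed
qed

lemma Q_weight_nonzero:
  assumes "0 < t" "t < 1" shows "Q_weight m t k \<noteq> 0"
proof -
  have "t ^ 2 < 1" "t ^ 2 \<noteq> 1" using assms by (auto simp: power_less_one_iff power2_eq_1_iff)
  then show ?thesis using assms Q_prod_nonzero[of t m "m - k"] qint_pos[of "t ^ 2" 2]
    by (simp add: Q_weight_def)
qed

lemma Q_weight_inverse:
  assumes t: "0 < t" "t < 1"
  shows "Q_weight m (1 / t) k * t ^ (m - k)
       = - Q_weight m t k * (t ^ odd_sum m (m - k) * t ^ (4 * k) * t ^ 2)"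
proof -
  have t1: "t \<noteq> 1" "t ^ 2 \<noteq> 1" "0 < t ^ 2" "t ^ 2 < 1"
    using t by (auto simp: power_less_one_iff power2_eq_1_iff)
  have i2: "qint ((1 / t) ^ 2) 2 = qint (t ^ 2) 2 / t ^ 2"
    using qint_inverse[OF t1(3) t1(2), of 2] by (simp add: power_one_over)
  have a: "(1 - 1 / t) ^ (m - k) = (-1) ^ (m - k) * (1 - t) ^ (m - k) / t ^ (m - k)"
  proof -
    have "(1 - t) / t = 1 / t - 1" using t by (simp add: diff_divide_distrib)
    then have "1 - 1 / t = - ((1 - t) / t)" by simp
    moreover have "(- ((1 - t) / t)) ^ (m - k) = (-1) ^ (m - k) * ((1 - t) / t) ^ (m - k)"
      by (rule power_minus)
    ultimately show ?thesis unfolding power_divide by (simp only: times_divide_eq_right)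
  qed
  have "1 - (1 / t) ^ 2 = (t ^ 2 - 1) / t ^ 2"
    unfolding power_one_over using t by (simp add: diff_divide_distrib)
  then have "(1 - (1 / t) ^ 2) ^ 2 = (t ^ 2 - 1) ^ 2 / (t ^ 2) ^ 2" by (simp add: power_divide)
  also have "(t ^ 2 - 1) ^ 2 = (1 - t ^ 2) ^ 2" by (rule power2_commute)
  also have "(t ^ 2) ^ 2 = t ^ 4" by (simp only: power_mult[symmetric]) simp
  finally have "((1 - (1 / t) ^ 2) ^ 2) ^ k = ((1 - t ^ 2) ^ 2 / t ^ 4) ^ k" by simp
  then have c: "(1 - (1 / t) ^ 2) ^ (2 * k) = (1 - t ^ 2) ^ (2 * k) / (t ^ 4) ^ k"
    by (simp only: power_mult[symmetric] power_divide)
  have p: "Q_prod m (1 / t) (m - k) = (-1) * (-1) ^ (m - k) * Q_prod m t (m - k) / t ^ odd_sum m (m - k)"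
    unfolding Q_prod_inverse[OF t(1)] by (simp add: mult_ac)
  have alg: "sg * (sg * a / d) / ((-1) * sg * b / B * (C / D) * (i / t ^ 2)) * d
      = - (sg * a / (b * C * i)) * (B * D * t ^ 2)"
    if "d \<noteq> 0" "b \<noteq> 0" "B \<noteq> 0" "C \<noteq> 0" "D \<noteq> 0" "i \<noteq> 0" "sg \<noteq> 0" for sg a d b B C D i :: real
    using that t by (simp add: field_simps)
  have "Q_weight m (1 / t) k * t ^ (m - k)
      = - ((-1) ^ (m - k) * (1 - t) ^ (m - k) / (Q_prod m t (m - k) * (1 - t ^ 2) ^ (2 * k) * qint (t ^ 2) 2))
          * (t ^ odd_sum m (m - k) * (t ^ 4) ^ k * t ^ 2)"
    unfolding Q_weight_def a c i2 p
    by (rule alg) (use t t1 Q_prod_nonzero[of t m "m - k"] qint_pos[of "t ^ 2" 2] in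
        \<open>auto simp: power_mult_distrib[symmetric]\<close>)
  then show ?thesis unfolding Q_weight_def by (simp add: power_mult)
qed

definition Q_exponent :: "nat \<Rightarrow> nat \<Rightarrow> nat" where
  "Q_exponent m k = odd_sum m (m - k) + 2 * k + 1 - (m - k)"

lemma Q_exponent_balance:
  fixes t x :: real
  assumes k: "k \<le> m"
  shows "x ^ (2 * m + 1) * (t ^ odd_sum m (m - k) * t ^ (4 * k) * t ^ 2)
       = x ^ (m - k) * x ^ (m - k) * (t * x) * (t ^ 2 * x ^ 2) ^ k * t ^ (m - k) * t ^ Q_exponent m k"
proof -
  define d where "d = m - k"
  have "odd_sum m d \<ge> d"
    using sum_mono[of "{0..d}" "\<lambda>_. 1::nat" "\<lambda>i. 2 * (m - i) + 1"] unfolding odd_sum_def by simp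
  then have e: "odd_sum m d + 4 * k + 2 = 1 + 2 * k + d + Q_exponent m k"
    unfolding Q_exponent_def d_def[symmetric] by simp
  have "t ^ odd_sum m d * t ^ (4 * k) * t ^ 2 = t ^ (odd_sum m d + 4 * k + 2)" by (simp only: power_add)
  also have "\<dots> = t * t ^ (2 * k) * t ^ d * t ^ Q_exponent m k"
    unfolding e by (simp only: power_add power_one_right)
  finally have "t ^ odd_sum m d * t ^ (4 * k) * t ^ 2 = t * t ^ (2 * k) * t ^ d * t ^ Q_exponent m k" .
  moreover have "2 * m + 1 = d + d + 1 + 2 * k" unfolding d_def using k by simp
  then have "x ^ (2 * m + 1) = x ^ d * x ^ d * x * x ^ (2 * k)"
    by (simp only: power_add power_one_right)
  moreover have "(t ^ 2 * x ^ 2) ^ k = t ^ (2 * k) * x ^ (2 * k)"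
    by (simp only: power_mult_distrib power_mult)
  ultimately show ?thesis unfolding d_def[symmetric] by (simp only: mult_ac)
qed

lemma Q_weight_basis_inverse:
  assumes t: "0 < t" "t < 1" and k: "k \<le> m"
  shows "t ^ (2 * (2 * m + 1) * n) * (Q_weight m (1 / t) k
           * poly (valuation_basis [:1, - (1 / t):] (qpair ((1 / t) ^ 2)) m k) (((1 / t) ^ 2) ^ n))
       = Q_weight m t k * t ^ Q_exponent m k
           * poly (valuation_basis [:1, -t:] (qpair (t ^ 2)) m k) ((t ^ 2) ^ n)"
proof -
  define x where "x = (t ^ 2) ^ n"
  define d where "d = m - k"
  define Y where "Y = t ^ 2 * x ^ 2"
  define R where "R = poly (qpair (t ^ 2)) x"
  define W where "W = 1 - t * x"
  define C where "C = t ^ odd_sum m d * t ^ (4 * k) * t ^ 2"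
  have nz: "x \<noteq> 0" "t * x \<noteq> 0" "Y \<noteq> 0" "t ^ d \<noteq> 0" unfolding x_def Y_def using t by auto
  have w: "Q_weight m (1 / t) k = - Q_weight m t k * C / t ^ d"
    using Q_weight_inverse[OF t, of m k] nz unfolding C_def d_def by (simp add: field_simps)
  have b1: "((1 / t) ^ 2) ^ n = 1 / x" unfolding x_def by (simp add: power_one_over)
  have b2: "poly (qpair ((1 / t) ^ 2)) (1 / x) = R / Y"
    using poly_qpair_inverse[of "t ^ 2" n] t unfolding R_def Y_def x_def by (simp add: power_one_over)
  have b3: "poly [:1, - (1 / t):] (1 / x) = - W / (t * x)"
    using nz unfolding W_def by (simp add: field_simps)
  have b: "poly (valuation_basis [:1, - (1 / t):] (qpair ((1 / t) ^ 2)) m k) (((1 / t) ^ 2) ^ n)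
      = (1 / x) ^ d * (- W / (t * x)) * (R / Y) ^ k"
    unfolding poly_valuation_basis b1 b2 b3 d_def ..
  have x: "t ^ (2 * (2 * m + 1) * n) = x ^ (2 * m + 1)"
    unfolding x_def by (simp only: power_mult[symmetric] mult_ac)
  have pw: "x ^ (2 * m + 1) * C = x ^ d * x ^ d * (t * x) * Y ^ k * t ^ d * t ^ Q_exponent m k"
    unfolding C_def d_def Y_def by (rule Q_exponent_balance[OF k])
  have "t ^ (2 * (2 * m + 1) * n) * (Q_weight m (1 / t) k
           * poly (valuation_basis [:1, - (1 / t):] (qpair ((1 / t) ^ 2)) m k) (((1 / t) ^ 2) ^ n))
      = Q_weight m t k * (x ^ (2 * m + 1) * C) * W * R ^ k / (x ^ d * (t * x) * Y ^ k * t ^ d)"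
    unfolding w b x using nz by (simp add: power_one_over power_divide field_simps)
  also have "\<dots> = Q_weight m t k * t ^ Q_exponent m k * (x ^ d * W * R ^ k)"
    unfolding pw using nz t by (simp add: field_simps)
  also have "x ^ d * W * R ^ k = poly (valuation_basis [:1, -t:] (qpair (t ^ 2)) m k) ((t ^ 2) ^ n)"
    unfolding poly_valuation_basis x_def R_def d_def W_def by simp
  finally show ?thesis .
qed

lemma Q_reciprocal:
  assumes Qid: "Q_identity m Q" and m: "m \<ge> 1" and k: "k \<le> m" and t: "0 < t" "t < 1"
  shows "t ^ (2 * (2 * m + 1)) * evalZ (Q (m - k)) t = t ^ Q_exponent m k * evalZ (Q (m - k)) (1 / t)"
proof -
  have t1: "t \<noteq> 1" "1 / t \<noteq> 1" "0 < 1 / t" "0 < t ^ 2" "t ^ 2 < 1" using t by (auto simp: power_less_one_iff)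
  let ?B = "\<lambda>t k. valuation_basis [:1, -t:] (qpair (t ^ 2)) m k"
  have "Q_weight m t k * (t ^ (2 * (2 * m + 1)) * evalZ (Q (m - k)) t)
      = Q_weight m t k * (t ^ Q_exponent m k * evalZ (Q (m - k)) (1 / t))"
  proof (rule valuation_basis_expansion_unique[OF t1(4,5) _ _ _ k])
    fix n :: nat assume n: "n \<ge> 1"
    have "(\<Sum>k\<le>m. Q_weight m t k * (t ^ (2 * (2 * m + 1)) * evalZ (Q (m - k)) t) * poly (?B t k) ((t ^ 2) ^ n))
        = t ^ (2 * (2 * m + 1)) * S (2 * m) n (t ^ 2)"
      using Q_identityD[OF Qid n t] Q_rhs_value_eq_poly_Q_rhs[OF t(1) t1(1)]
      by (simp add: poly_Q_rhs sum_distrib_left mult_ac)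
    also have "\<dots> = t ^ (2 * (2 * m + 1) * n) * S (2 * m) n ((1 / t) ^ 2)"
      by (rule S_even_inverse[OF t(1) t1(1) m, symmetric])
    also have "\<dots> = t ^ (2 * (2 * m + 1) * n) * poly (Q_rhs m Q (1 / t)) (((1 / t) ^ 2) ^ n)"
      using Q_identity_extends[OF Qid n t1(3,2)] Q_rhs_value_eq_poly_Q_rhs[OF t1(3,2)] by simp
    also have "\<dots> = (\<Sum>k\<le>m. Q_weight m t k * (t ^ Q_exponent m k * evalZ (Q (m - k)) (1 / t))
                        * poly (?B t k) ((t ^ 2) ^ n))"
      unfolding poly_Q_rhs sum_distrib_left
    proof (rule sum.cong[OF refl])
      fix k assume "k \<in> {..m}"
      then show "t ^ (2 * (2 * m + 1) * n) * (Q_weight m (1 / t) k * evalZ (Q (m - k)) (1 / t)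
            * poly (?B (1 / t) k) (((1 / t) ^ 2) ^ n))
          = Q_weight m t k * (t ^ Q_exponent m k * evalZ (Q (m - k)) (1 / t)) * poly (?B t k) ((t ^ 2) ^ n)"
        using Q_weight_basis_inverse[OF t, of k m n] by (simp add: mult_ac)
    qed
    finally show "(\<Sum>k\<le>m. Q_weight m t k * (t ^ (2 * (2 * m + 1)) * evalZ (Q (m - k)) t) * poly (?B t k) ((t ^ 2) ^ n))
        = (\<Sum>k\<le>m. Q_weight m t k * (t ^ Q_exponent m k * evalZ (Q (m - k)) (1 / t)) * poly (?B t k) ((t ^ 2) ^ n))" .
  qed (simp_all add: poly_qpair)
  then show ?thesis using Q_weight_nonzero[OF t] by simp
qed

lemma Q_symmetric:
  assumes Qid: "Q_identity m Q" and m: "m \<ge> 1" and k: "k \<le> m - 1"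
  shows "symmetric_coeffs (Q k)"
proof -
  have "ballot m k > 0" using k m by (intro ballot_pos) simp
  then have "poly (map_poly real_of_int (Q k)) 0 \<noteq> 0"
    using Q_at_0[OF Qid m, of k] k by (simp add: evalZ_def)
  then have "symmetric_coeffs (map_poly real_of_int (Q k))"
  proof (rule symmetric_coeffs_if_reciprocal)
    fix t :: real assume t: "0 < t" "t < 1"
    have "m - (m - k) = k" using k m by simp
    then show "t ^ (2 * (2 * m + 1)) * poly (map_poly real_of_int (Q k)) t
        = t ^ Q_exponent m (m - k) * poly (map_poly real_of_int (Q k)) (1 / t)"
      using Q_reciprocal[OF Qid m _ t, of "m - k"] unfolding evalZ_def by simp
  qed
  then show ?thesis by (simp add: symmetric_coeffs_map_poly_of_int_iff)
qed

theorem corollary3p3: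
  shows "(\<forall>m::nat. \<forall>P::nat \<Rightarrow> int poly. P_identity m P \<longrightarrow>
            (\<forall>k\<le>m. symmetric_coeffs (P k)))
       \<and> (\<forall>m::nat. m \<ge> 1 \<longrightarrow> (\<forall>Q::nat \<Rightarrow> int poly. Q_identity m Q \<longrightarrow>
            (\<forall>k\<le>m - 1. symmetric_coeffs (Q k))))"
  using P_symmetric Q_symmetric by blast

end
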